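(* Under the setting below, let $f\in\mathcal{F}$, $0<\epsilon_1\le|\mathcal{U}_A|$, and $\epsilon_{\mathrm{op}}=\alpha\epsilon_1/(4H|\mathcal{U}_A|^2|\mathcal{U}||\mathcal{O}|)$. Suppose $f'=\{m'_{(o,a,u),h},q'_0\}$ is any parameter tuple (not necessarily a valid PSR) with $\max_{o\in\mathcal{O},a\in\mathcal{A},h\in[H-1],u\in\mathcal{U}_{h+1}}\|m_{(o,a,u),h;f}-m'_{(o,a,u),h}\|_\infty\le\epsilon_{\mathrm{op}}$ and $\|q_{0;f}-q'_0\|_\infty\le\epsilon_{\mathrm{op}}$, and define $\mathbb{P}^\pi_{f'}(\tau_H)=e_{o_H}^\top M'_{o_{H-1},a_{H-1},H-1}\cdots M'_{o_1,a_1,1}q'_0\,\pi(\tau_H)$, where $M'_{o,a,h}$ has rows $(m'_{(o,a,u),h})^\top$. Then for every policy $\pi$, $\sum_{\tau_H}|\mathbb{P}^\pi_{f'}(\tau_H)-\mathbb{P}^\pi_f(\tau_H)|\le\epsilon_1$.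
   Context: Process: finite $\mathcal{O},\mathcal{A}$, horizon $H$; histories $\tau_h=(o_1,a_1,\dots,o_h,a_h)$; policies pick $a_h\sim\pi_h(\cdot\mid\tau_{h-1},o_h)$; $\pi(\tau_h)=\prod_{l\le h}\pi_l(a_l\mid\tau_{l-1},o_l)$; $\mathbb{P}^\pi_f(\tau_H)$ is the probability of $\tau_H$ under $\pi$ in model $f$. For a model $f$, a test starting at step $h$ is $t=(o_h,\dots,o_{h+W-1},a_h,\dots,a_{h+W-2})$; $\mathbb{P}_f(t\mid\tau_{h-1})$ is the probability of observing $o_{h:h+W-1}$ when executing $a_{h:h+W-2}$ after $\tau_{h-1}$ ($0$ if unreachable). A set $\mathcal{U}_h$ of tests starting at $h$ is a core test set if for every test $t$ starting at $h$ there is a history-independent $m_{t,h;f}$ with $\mathbb{P}_f(t\mid\tau_{h-1})=\langle m_{t,h;f},q_{\tau_{h-1};f}\rangle$, $q_{\tau_{h-1};f}=[\mathbb{P}_f(u\mid\tau_{h-1})]_{u\in\mathcal{U}_h}$; $q_{0;f}=[\mathbb{P}_f(u)]_{u\in\mathcal{U}_1}$; $M_{o,a,h;f}$ has rows $m_{(o,a,u),h;f}^\top$, $u\in\mathcal{U}_{h+1}$. $\mathcal{U}_{A,h}$: action sequences in $\mathcal{U}_h$; $|\mathcal{U}_A|=\max_h|\mathcal{U}_{A,h}|$; $|\mathcal{U}|=\max_h|\mathcal{U}_h|$. $d_{\mathrm{PSR},h;f}$ is the rank of the matrix with entries $\mathbb{P}_f(t\mid\tau_h)$. Core matrix $K_{h;f}$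 ($h\ge1$): columns $q_{\tau_h^1;f},\dots,q_{\tau_h^{d_{\mathrm{PSR},h;f}};f}$ for histories whose predictive states span all $q_{\tau_h;f}$, chosen to minimize $\|K_{h;f}^\dagger\|_{1\to1}$; $K_{0;f}=q_{0;f}$. Standing assumptions: every $f\in\mathcal{F}$ is a valid PSR with core test sets $\{\mathcal{U}_h\}_{h\in[H]}$ and $\|K_{h;f}^\dagger\|_{1\to1}\le1/\alpha$ for $h\in\{0,\dots,H-1\}$; every $o\in\mathcal{O}$ belongs to $\mathcal{U}_H$ and $m_{o,H;f}=e_o$ (standard basis vector indexing $o$ in $\mathcal{U}_H$). Convention: for $f\in\mathcal{F}$ the vectors $m_{(o,a,u),h;f}$ lie in the column space of $K_{h-1;f}$. *)

theory Defs
  imports Complex_Main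
begin

text \<open>Histories tau_h = (o_1,a_1,...,o_h,a_h) are lists of observation/action pairs.
A test (o_h,...,o_{h+W-1}, a_h,...,a_{h+W-2}) is a pair (list of (o,a) pairs of length W-1,
final observation).\<close>

type_synonym ('o,'a) hist = "('o \<times> 'a) list"
type_synonym ('o,'a) test = "('o \<times> 'a) list \<times> 'o"

text \<open>A model f is given by its observation kernel: f tau o is the probability of the next
observation o after history tau.\<close>

definition valid_model :: "nat \<Rightarrow> (('o::finite,'a) hist \<Rightarrow> 'o \<Rightarrow> real) \<Rightarrow> bool" where
  "valid_model H f \<longleftrightarrow>
     (\<forall>\<tau> ob. length \<tau> < H \<longrightarrow> 0 \<le> f \<tau> ob) \<and>
     (\<forall>\<tau>. length \<tau> < H \<longrightarrow> (\<Sum>ob\<in>UNIV. f \<tau> ob) = 1)"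

definition obs_prod :: "(('o,'a) hist \<Rightarrow> 'o \<Rightarrow> real) \<Rightarrow> ('o,'a) hist \<Rightarrow> ('o,'a) hist \<Rightarrow> real" where
  "obs_prod f \<tau> ps = (\<Prod>l<length ps. f (\<tau> @ take l ps) (fst (ps ! l)))"

definition reach_prob :: "(('o,'a) hist \<Rightarrow> 'o \<Rightarrow> real) \<Rightarrow> ('o,'a) hist \<Rightarrow> real" where
  "reach_prob f \<tau> = obs_prod f [] \<tau>"

text \<open>P_f(t | tau), equal to 0 if tau is unreachable.\<close>
definition test_prob :: "(('o,'a) hist \<Rightarrow> 'o \<Rightarrow> real) \<Rightarrow> ('o,'a) hist \<Rightarrow> ('o,'a) test \<Rightarrow> real" where
  "test_prob f \<tau> t =
     (if reach_prob f \<tau> = 0 then 0 else obs_prod f \<tau> (fst t) * f (\<tau> @ fst t) (snd t))"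

definition tests_from :: "nat \<Rightarrow> nat \<Rightarrow> ('o,'a) test set" where
  "tests_from H h = {t. h + length (fst t) \<le> H}"

definition core_test_set ::
  "nat \<Rightarrow> (('o,'a) hist \<Rightarrow> 'o \<Rightarrow> real) \<Rightarrow> nat \<Rightarrow> ('o,'a) test set \<Rightarrow> bool" where
  "core_test_set H f h Uh \<longleftrightarrow> Uh \<subseteq> tests_from H h \<and>
     (\<forall>t\<in>tests_from H h. \<exists>m. \<forall>\<tau>. length \<tau> = h - 1 \<longrightarrow>
        test_prob f \<tau> t = (\<Sum>u\<in>Uh. m u * test_prob f \<tau> u))"

definition valid_psr ::
  "nat \<Rightarrow> (nat \<Rightarrow> ('o::finite,'a) test set) \<Rightarrow> (('o,'a) hist \<Rightarrow> 'o \<Rightarrow> real) \<Rightarrow> bool" where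
  "valid_psr H U f \<longleftrightarrow> valid_model H f \<and> (\<forall>h\<in>{1..H}. core_test_set H f h (U h))"

text \<open>Policies: pi tau o a = pi_h(a | tau_{h-1}, o_h) with h = length tau + 1.\<close>
definition valid_policy :: "nat \<Rightarrow> (('o,'a::finite) hist \<Rightarrow> 'o \<Rightarrow> 'a \<Rightarrow> real) \<Rightarrow> bool" where
  "valid_policy H \<pi> \<longleftrightarrow>
     (\<forall>\<tau> ob a. length \<tau> < H \<longrightarrow> 0 \<le> \<pi> \<tau> ob a) \<and>
     (\<forall>\<tau> ob. length \<tau> < H \<longrightarrow> (\<Sum>a\<in>UNIV. \<pi> \<tau> ob a) = 1)"

definition policy_prob :: "(('o,'a) hist \<Rightarrow> 'o \<Rightarrow> 'a \<Rightarrow> real) \<Rightarrow> ('o,'a) hist \<Rightarrow> real" where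
  "policy_prob \<pi> \<tau> = (\<Prod>l<length \<tau>. \<pi> (take l \<tau>) (fst (\<tau> ! l)) (snd (\<tau> ! l)))"

definition traj_prob ::
  "(('o,'a) hist \<Rightarrow> 'o \<Rightarrow> real) \<Rightarrow> (('o,'a) hist \<Rightarrow> 'o \<Rightarrow> 'a \<Rightarrow> real) \<Rightarrow> ('o,'a) hist \<Rightarrow> real" where
  "traj_prob f \<pi> \<tau> = reach_prob f \<tau> * policy_prob \<pi> \<tau>"

text \<open>d_PSR,h: (column) rank of the matrix [P_f(t | tau_h)] with rows the tests t starting at
step h+1 and columns the histories tau_h.\<close>
definition cols_indep :: "nat \<Rightarrow> (('o,'a) hist \<Rightarrow> 'o \<Rightarrow> real) \<Rightarrow> nat \<Rightarrow> ('o,'a) hist set \<Rightarrow> bool" where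
  "cols_indep H f h S \<longleftrightarrow>
     (\<forall>c. (\<forall>t\<in>tests_from H (Suc h). (\<Sum>\<tau>\<in>S. c \<tau> * test_prob f \<tau> t) = 0) \<longrightarrow> (\<forall>\<tau>\<in>S. c \<tau> = 0))"

definition dPSR :: "nat \<Rightarrow> (('o,'a) hist \<Rightarrow> 'o \<Rightarrow> real) \<Rightarrow> nat \<Rightarrow> nat" where
  "dPSR H f h = Max {card S | S. S \<subseteq> {\<tau>. length \<tau> = h} \<and> cols_indep H f h S}"

text \<open>Admissible column histories of a core matrix K_h (h >= 1): d_PSR,h histories of length h
whose predictive states span all predictive states; K_0 = q_0 (the single empty history).\<close>
definition core_matrix_hists ::
  "nat \<Rightarrow> (nat \<Rightarrow> ('o,'a) test set) \<Rightarrow> (('o,'a) hist \<Rightarrow> 'o \<Rightarrow> real) \<Rightarrow> nat \<Rightarrow> ('o,'a) hist list \<Rightarrow> bool" where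
  "core_matrix_hists H U f h ks \<longleftrightarrow>
     (if h = 0 then ks = [[]]
      else length ks = dPSR H f h \<and> (\<forall>\<tau>\<in>set ks. length \<tau> = h) \<and>
        (\<forall>\<tau>. length \<tau> = h \<longrightarrow> (\<exists>c. \<forall>u\<in>U (Suc h).
            test_prob f \<tau> u = (\<Sum>i<length ks. c i * test_prob f (ks ! i) u))))"

definition core_mat :: "(('o,'a) hist \<Rightarrow> 'o \<Rightarrow> real) \<Rightarrow> ('o,'a) hist list \<Rightarrow> ('o,'a) test \<Rightarrow> nat \<Rightarrow> real" where
  "core_mat f ks = (\<lambda>u i. test_prob f (ks ! i) u)"

text \<open>X (d x U) is the Moore-Penrose pseudo-inverse of K (U x d): the four Penrose equations.\<close>
definition is_mp_pinv :: "'u set \<Rightarrow> nat \<Rightarrow> ('u \<Rightarrow> nat \<Rightarrow> real) \<Rightarrow> (nat \<Rightarrow> 'u \<Rightarrow> real) \<Rightarrow> bool" where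
  "is_mp_pinv U d K X \<longleftrightarrow>
     (\<forall>u\<in>U. \<forall>j<d. (\<Sum>i<d. K u i * (\<Sum>v\<in>U. X i v * K v j)) = K u j) \<and>
     (\<forall>i<d. \<forall>v\<in>U. (\<Sum>w\<in>U. X i w * (\<Sum>j<d. K w j * X j v)) = X i v) \<and>
     (\<forall>u\<in>U. \<forall>v\<in>U. (\<Sum>i<d. K u i * X i v) = (\<Sum>i<d. K v i * X i u)) \<and>
     (\<forall>i<d. \<forall>j<d. (\<Sum>v\<in>U. X i v * K v j) = (\<Sum>v\<in>U. X j v * K v i))"

text \<open>1->1 operator norm of a d x U matrix: maximum absolute column sum.\<close>
definition norm_1_1 :: "'u set \<Rightarrow> nat \<Rightarrow> (nat \<Rightarrow> 'u \<Rightarrow> real) \<Rightarrow> real" where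
  "norm_1_1 U d X = (if U = {} then 0 else Max ((\<lambda>v. \<Sum>i<d. \<bar>X i v\<bar>) ` U))"

text \<open>||K_{h;f}^dagger||_{1->1} <= 1/alpha for h = 0..H-1, where K_{h;f} is the admissible choice
minimising this norm (equivalently: some admissible choice achieves the bound).\<close>
definition core_bound ::
  "nat \<Rightarrow> (nat \<Rightarrow> ('o,'a) test set) \<Rightarrow> (('o,'a) hist \<Rightarrow> 'o \<Rightarrow> real) \<Rightarrow> real \<Rightarrow> bool" where
  "core_bound H U f \<alpha> \<longleftrightarrow> (\<forall>h\<in>{0..<H}. \<exists>ks X.
      core_matrix_hists H U f h ks \<and>
      is_mp_pinv (U (Suc h)) (length ks) (core_mat f ks) X \<and>
      norm_1_1 (U (Suc h)) (length ks) X \<le> 1 / \<alpha>)"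

definition UA_card :: "nat \<Rightarrow> (nat \<Rightarrow> ('o,'a) test set) \<Rightarrow> nat" where
  "UA_card H U = Max ((\<lambda>h. card ((\<lambda>t. map snd (fst t)) ` U h)) ` {1..H})"

definition U_card :: "nat \<Rightarrow> (nat \<Rightarrow> ('o,'a) test set) \<Rightarrow> nat" where
  "U_card H U = Max ((\<lambda>h. card (U h)) ` {1..H})"

text \<open>The vector M'_{o_n,a_n,n} ... M'_{o_1,a_1,1} q'_0 (indexed by U_{n+1}); m' n o a u v is the
v-entry of m'_{(o,a,u),n}.\<close>
primrec pvec ::
  "(nat \<Rightarrow> 'o \<Rightarrow> 'a \<Rightarrow> ('o,'a) test \<Rightarrow> ('o,'a) test \<Rightarrow> real) \<Rightarrow> (('o,'a) test \<Rightarrow> real) \<Rightarrow>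
   (nat \<Rightarrow> ('o,'a) test set) \<Rightarrow> ('o,'a) hist \<Rightarrow> nat \<Rightarrow> ('o,'a) test \<Rightarrow> real" where
  "pvec m' q0' U \<tau> 0 = q0'"
| "pvec m' q0' U \<tau> (Suc n) =
     (\<lambda>u. \<Sum>v\<in>U (Suc n). m' (Suc n) (fst (\<tau> ! n)) (snd (\<tau> ! n)) u v * pvec m' q0' U \<tau> n v)"

definition traj_prob_param ::
  "nat \<Rightarrow> (nat \<Rightarrow> ('o,'a) test set) \<Rightarrow> (nat \<Rightarrow> 'o \<Rightarrow> 'a \<Rightarrow> ('o,'a) test \<Rightarrow> ('o,'a) test \<Rightarrow> real) \<Rightarrow>
   (('o,'a) test \<Rightarrow> real) \<Rightarrow> (('o,'a) hist \<Rightarrow> 'o \<Rightarrow> 'a \<Rightarrow> real) \<Rightarrow> ('o,'a) hist \<Rightarrow> real" where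
  "traj_prob_param H U m' q0' \<pi> \<tau> =
     pvec m' q0' U \<tau> (H - 1) ([], fst (\<tau> ! (H - 1))) * policy_prob \<pi> \<tau>"

end

theory Submission
  imports Defs
begin

text \<open>
Write x_s = M'_s q'_0 for the vector predicted by the perturbed parameters after a history s,
and b_s = M_s q_0 = P_f(s) q_s for the true one (the operators M reproduce predictive states).
The trajectory error is at most the policy-weighted l1-distance e_{H-1} between x and b on
histories of length H - 1. Telescoping, x_s - b_s is the propagated initial error plus the
single-step errors (M'_j - M_j) x_{s<j}, each propagated onwards by the true operators.
Since the rows of M lie in the column space of the core matrix K, M y = M K K^+ y for every y,
and the columns of K are true predictive states; hence a propagated vector has policy-weighted
l1-norm at most |U_A| ||K^+ y||_1 <= (|U_A| / alpha) ||y||_1. A single-step error has l1-norm at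
most |U| eps_op ||x_{s<j}||_1, summing over the next observation costs a factor |O|, and by
induction the weighted norm of x stays below |U_A| + e_j <= 2 |U_A|. Altogether
e_n <= (|U_A| / alpha) |U| eps_op (2 n |O| |U_A| + 1) <= 3/4 eps_1 by the choice of eps_op.
\<close>

section \<open>Observation and policy products\<close>

lemma obs_prod_Nil [simp]: "obs_prod f \<tau> [] = 1"
  by (simp add: obs_prod_def)

lemma obs_prod_Cons: "obs_prod f \<tau> (p # \<sigma>) = f \<tau> (fst p) * obs_prod f (\<tau> @ [p]) \<sigma>"
  unfolding obs_prod_def by (simp add: prod.lessThan_Suc_shift del: prod.lessThan_Suc)

lemma obs_prod_append: "obs_prod f \<tau> (\<sigma> @ \<sigma>') = obs_prod f \<tau> \<sigma> * obs_prod f (\<tau> @ \<sigma>) \<sigma>'"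
  by (induction \<sigma> arbitrary: \<tau>) (simp_all add: obs_prod_Cons)

lemma obs_prod_snoc: "obs_prod f \<tau> (\<sigma> @ [p]) = obs_prod f \<tau> \<sigma> * f (\<tau> @ \<sigma>) (fst p)"
  by (simp add: obs_prod_append obs_prod_Cons)

lemma reach_prob_append: "reach_prob f (\<tau> @ \<sigma>) = reach_prob f \<tau> * obs_prod f \<tau> \<sigma>"
  by (simp add: reach_prob_def obs_prod_append)

lemma test_prob_append:
  "test_prob f \<tau> (\<sigma> @ w, ob) = obs_prod f \<tau> \<sigma> * test_prob f (\<tau> @ \<sigma>) (w, ob)"
  by (simp add: test_prob_def reach_prob_append obs_prod_append)

lemma test_prob_Cons: "test_prob f \<tau> (p # w, ob) = f \<tau> (fst p) * test_prob f (\<tau> @ [p]) (w, ob)"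
  using test_prob_append[of f \<tau> "[p]" w ob] by (simp add: obs_prod_Cons)

lemma obs_prod_nonneg:
  "valid_model H f \<Longrightarrow> length \<tau> + length \<sigma> \<le> H \<Longrightarrow> 0 \<le> obs_prod f \<tau> \<sigma>"
proof (induction \<sigma> arbitrary: \<tau>)
  case (Cons p \<sigma>)
  then show ?case
    unfolding obs_prod_Cons valid_model_def by (intro mult_nonneg_nonneg) auto
qed simp

lemma test_prob_nonneg:
  "valid_model H f \<Longrightarrow> length \<tau> + length (fst t) < H \<Longrightarrow> 0 \<le> test_prob f \<tau> t"
  using obs_prod_nonneg[of H f \<tau> "fst t"]
  by (auto simp: test_prob_def valid_model_def intro!: mult_nonneg_nonneg)

text \<open>Only an inequality: test_prob vanishes after unreachable histories.\<close>

lemma test_prob_le_obs_prod_snoc: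
  assumes "valid_model H f" and "length \<tau> + length \<sigma> < H"
  shows "test_prob f \<tau> (\<sigma>, ob) \<le> obs_prod f \<tau> (\<sigma> @ [(ob, a)])"
  using assms obs_prod_nonneg[of H f \<tau> "\<sigma> @ [(ob, a)]"]
  by (simp add: test_prob_def obs_prod_snoc)

definition policy_prob_from ::
  "(('o,'a) hist \<Rightarrow> 'o \<Rightarrow> 'a \<Rightarrow> real) \<Rightarrow> ('o,'a) hist \<Rightarrow> ('o,'a) hist \<Rightarrow> real" where
  "policy_prob_from \<pi> \<rho> \<sigma> = (\<Prod>l<length \<sigma>. \<pi> (\<rho> @ take l \<sigma>) (fst (\<sigma> ! l)) (snd (\<sigma> ! l)))"

lemma policy_prob_from_Nil [simp]: "policy_prob_from \<pi> \<rho> [] = 1"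
  by (simp add: policy_prob_from_def)

lemma policy_prob_from_Cons:
  "policy_prob_from \<pi> \<rho> (p # \<sigma>) = \<pi> \<rho> (fst p) (snd p) * policy_prob_from \<pi> (\<rho> @ [p]) \<sigma>"
  unfolding policy_prob_from_def by (simp add: prod.lessThan_Suc_shift del: prod.lessThan_Suc)

lemma policy_prob_from_append:
  "policy_prob_from \<pi> \<rho> (\<sigma> @ \<sigma>') = policy_prob_from \<pi> \<rho> \<sigma> * policy_prob_from \<pi> (\<rho> @ \<sigma>) \<sigma>'"
  by (induction \<sigma> arbitrary: \<rho>) (simp_all add: policy_prob_from_Cons)

lemma policy_prob_from_snoc:
  "policy_prob_from \<pi> \<rho> (\<sigma> @ [p]) = policy_prob_from \<pi> \<rho> \<sigma> * \<pi> (\<rho> @ \<sigma>) (fst p) (snd p)"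
  by (simp add: policy_prob_from_append policy_prob_from_Cons)

lemma policy_prob_eq_from_Nil: "policy_prob \<pi> \<tau> = policy_prob_from \<pi> [] \<tau>"
  by (simp add: policy_prob_def policy_prob_from_def)

lemma policy_prob_from_nonneg:
  "valid_policy H \<pi> \<Longrightarrow> length \<rho> + length \<sigma> \<le> H \<Longrightarrow> 0 \<le> policy_prob_from \<pi> \<rho> \<sigma>"
proof (induction \<sigma> arbitrary: \<rho>)
  case (Cons p \<sigma>)
  then show ?case
    unfolding policy_prob_from_Cons valid_policy_def by (intro mult_nonneg_nonneg) auto
qed simp

lemma sum_lists_length_add:
  "(\<Sum>xs\<in>{xs :: 'b::finite list. length xs = a + b}. F xs) =
   (\<Sum>ys\<in>{ys. length ys = a}. \<Sum>zs\<in>{zs. length zs = b}. F (ys @ zs))"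
proof -
  let ?A = "{ys :: 'b list. length ys = a} \<times> {zs. length zs = b}"
  have "{xs :: 'b list. length xs = a + b} = (\<lambda>(ys, zs). ys @ zs) ` ?A"
  proof (intro set_eqI iffI)
    fix xs :: "'b list" assume "xs \<in> {xs. length xs = a + b}"
    then show "xs \<in> (\<lambda>(ys, zs). ys @ zs) ` ?A"
      by (intro image_eqI[where x = "(take a xs, drop a xs)"]) auto
  qed auto
  moreover have "inj_on (\<lambda>(ys, zs). ys @ zs) ?A"
    by (auto simp: inj_on_def)
  ultimately show ?thesis
    by (simp only: sum.reindex sum.cartesian_product) (simp add: case_prod_beta)
qed

lemma sum_hists_length_Suc:
  "(\<Sum>\<sigma>\<in>{\<sigma> :: ('o::finite, 'a::finite) hist. length \<sigma> = Suc n}. F \<sigma>) =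
   (\<Sum>\<sigma>\<in>{\<sigma>. length \<sigma> = n}. \<Sum>ob\<in>UNIV. \<Sum>a\<in>UNIV. F (\<sigma> @ [(ob, a)]))"
proof -
  have singletons: "{zs :: ('o \<times> 'a) list. length zs = 1} = (\<lambda>p. [p]) ` (UNIV \<times> UNIV)"
    by (auto simp: length_Suc_conv)
  have "(\<Sum>zs\<in>{zs. length zs = 1}. F (\<sigma> @ zs)) = (\<Sum>ob\<in>UNIV. \<Sum>a\<in>UNIV. F (\<sigma> @ [(ob, a)]))"
    for \<sigma>
    unfolding singletons by (simp add: sum.reindex inj_on_def sum.cartesian_product)
  then show ?thesis
    using sum_lists_length_add[where a = n and b = 1 and F = F] by simp
qed

lemma sum_policy_obs_prod_eq_1:
  fixes f :: "('o::finite, 'a::finite) hist \<Rightarrow> 'o \<Rightarrow> real"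
  assumes vm: "valid_model H f" and vp: "valid_policy H \<pi>"
    and "length \<tau> + n \<le> H" and "length \<rho> + n \<le> H"
  shows "(\<Sum>\<sigma>\<in>{\<sigma>. length \<sigma> = n}. policy_prob_from \<pi> \<rho> \<sigma> * obs_prod f \<tau> \<sigma>) = 1"
  using assms(3,4)
proof (induction n)
  case (Suc n)
  have "(\<Sum>\<sigma>\<in>{\<sigma>. length \<sigma> = Suc n}. policy_prob_from \<pi> \<rho> \<sigma> * obs_prod f \<tau> \<sigma>) =
    (\<Sum>\<sigma>\<in>{\<sigma>. length \<sigma> = n}. policy_prob_from \<pi> \<rho> \<sigma> * obs_prod f \<tau> \<sigma> *
       (\<Sum>ob\<in>UNIV. f (\<tau> @ \<sigma>) ob * (\<Sum>a\<in>UNIV. \<pi> (\<rho> @ \<sigma>) ob a)))"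
    unfolding sum_hists_length_Suc
    by (simp add: policy_prob_from_snoc obs_prod_snoc sum_distrib_left sum_distrib_right mult_ac)
  also have "\<dots> = (\<Sum>\<sigma>\<in>{\<sigma>. length \<sigma> = n}. policy_prob_from \<pi> \<rho> \<sigma> * obs_prod f \<tau> \<sigma>)"
    using vm vp Suc.prems by (intro sum.cong) (auto simp: valid_model_def valid_policy_def)
  finally show ?case
    using Suc by simp
qed simp

lemma sum_map_snd_snoc:
  "(\<Sum>\<sigma>\<in>{\<sigma> :: ('o::finite \<times> 'b) list. map snd \<sigma> = A @ [a]}. F \<sigma>) =
   (\<Sum>\<sigma>\<in>{\<sigma>. map snd \<sigma> = A}. \<Sum>ob\<in>UNIV. F (\<sigma> @ [(ob, a)]))"
proof -
  let ?S = "{\<sigma> :: ('o \<times> 'b) list. map snd \<sigma> = A} \<times> UNIV"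
  have "{\<sigma>. map snd \<sigma> = A @ [a]} = (\<lambda>(\<sigma>, ob). \<sigma> @ [(ob, a)]) ` ?S"
    by (fastforce simp: map_eq_append_conv image_iff)
  moreover have "inj_on (\<lambda>(\<sigma>, ob). \<sigma> @ [(ob, a)]) ?S"
    by (auto simp: inj_on_def)
  ultimately show ?thesis
    by (simp only: sum.reindex sum.cartesian_product) (simp add: case_prod_beta)
qed

lemma sum_obs_prod_fixed_actions_eq_1:
  fixes f :: "('o::finite, 'a) hist \<Rightarrow> 'o \<Rightarrow> real"
  assumes vm: "valid_model H f"
  shows "length \<tau> + length A \<le> H \<Longrightarrow> (\<Sum>\<sigma>\<in>{\<sigma>. map snd \<sigma> = A}. obs_prod f \<tau> \<sigma>) = 1"
proof (induction A rule: rev_induct)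
  case (snoc a A)
  have "(\<Sum>\<sigma>\<in>{\<sigma>. map snd \<sigma> = A @ [a]}. obs_prod f \<tau> \<sigma>) =
        (\<Sum>\<sigma>\<in>{\<sigma>. map snd \<sigma> = A}. obs_prod f \<tau> \<sigma> * (\<Sum>ob\<in>UNIV. f (\<tau> @ \<sigma>) ob))"
    by (simp add: sum_map_snd_snoc obs_prod_snoc sum_distrib_left)
  also have "\<dots> = (\<Sum>\<sigma>\<in>{\<sigma>. map snd \<sigma> = A}. obs_prod f \<tau> \<sigma>)"
    using vm snoc.prems by (intro sum.cong) (auto simp: valid_model_def dest: arg_cong[of _ _ length])
  finally show ?case
    using snoc by simp
qed simp

lemma finite_map_snd_eq: "finite {\<sigma> :: ('o::finite \<times> 'a::finite) list. map snd \<sigma> = A}"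
  by (rule finite_subset[OF _ finite_list_length[of "length A"]]) auto

lemma sum_test_prob_fixed_actions_le_1:
  fixes f :: "('o::finite, 'a::finite) hist \<Rightarrow> 'o \<Rightarrow> real"
  assumes vm: "valid_model H f" and len: "length \<tau> + length A < H"
  shows "(\<Sum>\<sigma>\<in>{\<sigma>. map snd \<sigma> = A}. \<Sum>ob\<in>UNIV. test_prob f \<tau> (\<sigma>, ob)) \<le> 1"
proof -
  have "(\<Sum>\<sigma>\<in>{\<sigma>. map snd \<sigma> = A}. \<Sum>ob\<in>UNIV. test_prob f \<tau> (\<sigma>, ob)) \<le>
        (\<Sum>\<sigma>\<in>{\<sigma>. map snd \<sigma> = A}. \<Sum>ob\<in>UNIV. obs_prod f \<tau> (\<sigma> @ [(ob, undefined)]))"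
    \<comment> \<open>the last observation does not depend on the action appended after it\<close>
    using len by (intro sum_mono test_prob_le_obs_prod_snoc[OF vm]) auto
  also have "\<dots> = 1"
    using len by (simp add: sum_map_snd_snoc[symmetric] sum_obs_prod_fixed_actions_eq_1[OF vm])
  finally show ?thesis .
qed

lemma sum_test_prob_le_card_actions:
  fixes f :: "('o::finite, 'a::finite) hist \<Rightarrow> 'o \<Rightarrow> real"
  assumes vm: "valid_model H f" and sub: "T \<subseteq> tests_from H (Suc (length \<tau>))" and fin: "finite T"
  shows "(\<Sum>t\<in>T. test_prob f \<tau> t) \<le> card ((\<lambda>t. map snd (fst t)) ` T)"
proof -
  let ?acts = "\<lambda>t. map snd (fst t)"
  have "(\<Sum>t\<in>T. test_prob f \<tau> t) = (\<Sum>A\<in>?acts ` T. \<Sum>t\<in>{t\<in>T. ?acts t = A}. test_prob f \<tau> t)"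
    using fin by (intro sum.group[symmetric]) auto
  also have "\<dots> \<le> (\<Sum>A\<in>?acts ` T. 1)"
  proof (rule sum_mono)
    fix A assume "A \<in> ?acts ` T"
    then have len: "length \<tau> + length A < H"
      using sub by (auto simp: tests_from_def)
    have "(\<Sum>t\<in>{t\<in>T. ?acts t = A}. test_prob f \<tau> t) \<le>
          (\<Sum>t\<in>{\<sigma>. map snd \<sigma> = A} \<times> UNIV. test_prob f \<tau> t)"
      using len by (intro sum_mono2 finite_cartesian_product finite_map_snd_eq)
        (auto intro!: test_prob_nonneg[OF vm])
    also have "\<dots> \<le> 1"
      using sum_test_prob_fixed_actions_le_1[OF vm len] by (simp add: sum.cartesian_product)
    finally show "(\<Sum>t\<in>{t\<in>T. ?acts t = A}. test_prob f \<tau> t) \<le> 1" .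
  qed
  finally show ?thesis
    by simp
qed

section \<open>Products of PSR operators\<close>

text \<open>
psr_op m U j o a is the operator M_{o,a,j} acting on functions on U j, and psr_ops m U j s
applies the operators of the steps j+1, ..., j+|s| along s, so that
psr_ops m U 0 s q = M_{s_n,n} ... M_{s_1,1} q.
\<close>

definition psr_op ::
  "(nat \<Rightarrow> 'o \<Rightarrow> 'a \<Rightarrow> ('o,'a) test \<Rightarrow> ('o,'a) test \<Rightarrow> real) \<Rightarrow> (nat \<Rightarrow> ('o,'a) test set) \<Rightarrow>
   nat \<Rightarrow> 'o \<Rightarrow> 'a \<Rightarrow> (('o,'a) test \<Rightarrow> real) \<Rightarrow> ('o,'a) test \<Rightarrow> real" where
  "psr_op m U j ob a y = (\<lambda>u. \<Sum>v\<in>U j. m j ob a u v * y v)"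

fun psr_ops ::
  "(nat \<Rightarrow> 'o \<Rightarrow> 'a \<Rightarrow> ('o,'a) test \<Rightarrow> ('o,'a) test \<Rightarrow> real) \<Rightarrow> (nat \<Rightarrow> ('o,'a) test set) \<Rightarrow>
   nat \<Rightarrow> ('o,'a) hist \<Rightarrow> (('o,'a) test \<Rightarrow> real) \<Rightarrow> ('o,'a) test \<Rightarrow> real" where
  "psr_ops m U j [] y = y"
| "psr_ops m U j (p # \<sigma>) y = psr_ops m U (Suc j) \<sigma> (psr_op m U (Suc j) (fst p) (snd p) y)"

definition psr_op_err ::
  "(nat \<Rightarrow> 'o \<Rightarrow> 'a \<Rightarrow> ('o,'a) test \<Rightarrow> ('o,'a) test \<Rightarrow> real) \<Rightarrow>
   (nat \<Rightarrow> 'o \<Rightarrow> 'a \<Rightarrow> ('o,'a) test \<Rightarrow> ('o,'a) test \<Rightarrow> real) \<Rightarrow> (nat \<Rightarrow> ('o,'a) test set) \<Rightarrow>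
   nat \<Rightarrow> 'o \<Rightarrow> 'a \<Rightarrow> (('o,'a) test \<Rightarrow> real) \<Rightarrow> ('o,'a) test \<Rightarrow> real" where
  "psr_op_err m' m U j ob a y = (\<lambda>u. psr_op m' U j ob a y u - psr_op m U j ob a y u)"

lemma psr_ops_snoc:
  "psr_ops m U j (\<sigma> @ [p]) y = psr_op m U (Suc (j + length \<sigma>)) (fst p) (snd p) (psr_ops m U j \<sigma> y)"
  by (induction \<sigma> arbitrary: j y) simp_all

lemma pvec_eq_psr_ops: "n \<le> length \<tau> \<Longrightarrow> pvec m q U \<tau> n = psr_ops m U 0 (take n \<tau>) q"
proof (induction n)
  case (Suc n)
  then have "take (Suc n) \<tau> = take n \<tau> @ [\<tau> ! n]"
    by (simp add: take_Suc_conv_app_nth)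
  with Suc show ?case
    by (simp add: psr_ops_snoc psr_op_def min_def)
qed simp

lemma psr_ops_cong:
  assumes "\<And>v. v \<in> U (Suc j) \<Longrightarrow> y v = y' v" and "u \<in> U (Suc (j + length \<sigma>))"
  shows "psr_ops m U j \<sigma> y u = psr_ops m U j \<sigma> y' u"
proof (cases \<sigma>)
  case (Cons p \<sigma>')
  have "psr_op m U (Suc j) (fst p) (snd p) y = psr_op m U (Suc j) (fst p) (snd p) y'"
    using assms(1) unfolding psr_op_def by (intro ext sum.cong) auto
  with Cons show ?thesis
    by simp
qed (use assms in simp)

lemma psr_op_minus:
  "psr_op m U j ob a (\<lambda>v. y v - z v) = (\<lambda>u. psr_op m U j ob a y u - psr_op m U j ob a z u)"
  unfolding psr_op_def by (simp add: right_diff_distrib sum_subtractf)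

lemma psr_op_add:
  "psr_op m U j ob a (\<lambda>v. y v + z v) = (\<lambda>u. psr_op m U j ob a y u + psr_op m U j ob a z u)"
  unfolding psr_op_def by (simp add: distrib_left sum.distrib)

lemma psr_op_sum_mult:
  "finite I \<Longrightarrow> psr_op m U j ob a (\<lambda>v. \<Sum>i\<in>I. c i * y i v) = (\<lambda>u. \<Sum>i\<in>I. c i * psr_op m U j ob a (y i) u)"
  unfolding psr_op_def by (simp add: sum_distrib_left sum.swap[where A = I] mult_ac)

lemma psr_op_sum:
  "finite I \<Longrightarrow> psr_op m U j ob a (\<lambda>v. \<Sum>i\<in>I. y i v) = (\<lambda>u. \<Sum>i\<in>I. psr_op m U j ob a (y i) u)"
  using psr_op_sum_mult[of I m U j ob a "\<lambda>_. 1" y] by simp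

lemma psr_ops_sum_mult:
  "finite I \<Longrightarrow> psr_ops m U j \<sigma> (\<lambda>v. \<Sum>i\<in>I. c i * y i v) = (\<lambda>u. \<Sum>i\<in>I. c i * psr_ops m U j \<sigma> (y i) u)"
  by (induction \<sigma> arbitrary: j y) (simp_all add: psr_op_sum_mult)

lemma psr_ops_mult: "psr_ops m U j \<sigma> (\<lambda>v. c * y v) = (\<lambda>u. c * psr_ops m U j \<sigma> y u)"
  using psr_ops_sum_mult[of "{()}" m U j \<sigma> "\<lambda>_. c" "\<lambda>_. y"] by simp

lemma psr_ops_diff_telescope:
  "psr_ops m' U 0 \<sigma> y' u - psr_ops m U 0 \<sigma> y u =
   (\<Sum>j<length \<sigma>. psr_ops m U (Suc j) (drop (Suc j) \<sigma>)
      (psr_op_err m' m U (Suc j) (fst (\<sigma> ! j)) (snd (\<sigma> ! j)) (psr_ops m' U 0 (take j \<sigma>) y')) u)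
   + psr_ops m U 0 \<sigma> (\<lambda>v. y' v - y v) u"
proof (induction \<sigma> arbitrary: u rule: rev_induct)
  case (snoc p \<sigma>)
  let ?M = "psr_op m U (Suc (length \<sigma>)) (fst p) (snd p)"
  let ?T = "\<lambda>\<sigma> j. psr_ops m U (Suc j) (drop (Suc j) \<sigma>)
      (psr_op_err m' m U (Suc j) (fst (\<sigma> ! j)) (snd (\<sigma> ! j)) (psr_ops m' U 0 (take j \<sigma>) y'))"
  have IH: "(\<lambda>v. psr_ops m' U 0 \<sigma> y' v - psr_ops m U 0 \<sigma> y v) =
            (\<lambda>v. (\<Sum>j<length \<sigma>. ?T \<sigma> j v) + psr_ops m U 0 \<sigma> (\<lambda>v. y' v - y v) v)"
    using snoc.IH by simp
  have shift: "?M (?T \<sigma> j) = ?T (\<sigma> @ [p]) j" if "j < length \<sigma>" for j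
  proof -
    have "Suc (length \<sigma> - Suc 0) = length \<sigma>"
      using that by simp
    with that show ?thesis
      by (simp add: psr_ops_snoc nth_append)
  qed
  have "psr_ops m' U 0 (\<sigma> @ [p]) y' u - psr_ops m U 0 (\<sigma> @ [p]) y u =
        ?M (\<lambda>v. psr_ops m' U 0 \<sigma> y' v - psr_ops m U 0 \<sigma> y v) u
        + psr_op_err m' m U (Suc (length \<sigma>)) (fst p) (snd p) (psr_ops m' U 0 \<sigma> y') u"
    by (simp add: psr_ops_snoc psr_op_minus psr_op_err_def)
  also have "?M (\<lambda>v. psr_ops m' U 0 \<sigma> y' v - psr_ops m U 0 \<sigma> y v) u =
             (\<Sum>j<length \<sigma>. ?T (\<sigma> @ [p]) j u) + psr_ops m U 0 (\<sigma> @ [p]) (\<lambda>v. y' v - y v) u"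
    unfolding IH by (simp add: psr_op_add psr_op_sum shift psr_ops_snoc)
  also have "psr_op_err m' m U (Suc (length \<sigma>)) (fst p) (snd p) (psr_ops m' U 0 \<sigma> y') u =
             ?T (\<sigma> @ [p]) (length \<sigma>) u"
    by simp
  finally show ?case
    by (simp only: length_append_singleton sum.lessThan_Suc ac_simps)
qed simp

lemma sum_abs_psr_op_err_le:
  fixes \<epsilon> :: real
  assumes close: "\<forall>u\<in>V. \<forall>v\<in>U j. \<bar>m' j ob a u v - m j ob a u v\<bar> \<le> \<epsilon>"
  shows "(\<Sum>u\<in>V. \<bar>psr_op_err m' m U j ob a y u\<bar>) \<le> real (card V) * \<epsilon> * (\<Sum>v\<in>U j. \<bar>y v\<bar>)"
proof -
  have "\<bar>psr_op_err m' m U j ob a y u\<bar> \<le> \<epsilon> * (\<Sum>v\<in>U j. \<bar>y v\<bar>)" if u: "u \<in> V" for u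
  proof -
    have "\<bar>psr_op_err m' m U j ob a y u\<bar> = \<bar>\<Sum>v\<in>U j. (m' j ob a u v - m j ob a u v) * y v\<bar>"
      by (simp add: psr_op_err_def psr_op_def sum_subtractf left_diff_distrib)
    also have "\<dots> \<le> (\<Sum>v\<in>U j. \<bar>m' j ob a u v - m j ob a u v\<bar> * \<bar>y v\<bar>)"
      by (rule sum_abs[THEN order_trans]) (simp add: abs_mult)
    also have "\<dots> \<le> (\<Sum>v\<in>U j. \<epsilon> * \<bar>y v\<bar>)"
      using close u by (intro sum_mono mult_right_mono) auto
    finally show ?thesis
      by (simp add: sum_distrib_left)
  qed
  then have "(\<Sum>u\<in>V. \<bar>psr_op_err m' m U j ob a y u\<bar>) \<le> (\<Sum>u\<in>V. \<epsilon> * (\<Sum>v\<in>U j. \<bar>y v\<bar>))"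
    by (rule sum_mono)
  then show ?thesis
    by simp
qed

section \<open>Core matrices and their pseudo-inverses\<close>

text \<open>K X is the orthogonal projection onto the column space of K, so r K X = r for every
row r in that space.\<close>

lemma is_mp_pinv_expand:
  assumes pinv: "is_mp_pinv U d K X"
    and row: "\<And>v. v \<in> U \<Longrightarrow> r v = (\<Sum>l<d. w l * K v l)"
  shows "(\<Sum>v\<in>U. r v * y v) = (\<Sum>i<d. (\<Sum>v\<in>U. X i v * y v) * (\<Sum>v\<in>U. r v * K v i))"
proof -
  have K_X_K: "(\<Sum>i<d. K u i * (\<Sum>v\<in>U. X i v * K v l)) = K u l" if "u \<in> U" "l < d" for u l
    using pinv that unfolding is_mp_pinv_def by blast
  have K_X_sym: "(\<Sum>i<d. K u i * X i v) = (\<Sum>i<d. K v i * X i u)" if "u \<in> U" "v \<in> U" for u v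
    using pinv that unfolding is_mp_pinv_def by blast
  have proj: "(\<Sum>v\<in>U. r v * (\<Sum>i<d. K v i * X i u)) = r u" if u: "u \<in> U" for u
  proof -
    have "(\<Sum>v\<in>U. r v * (\<Sum>i<d. K v i * X i u)) =
          (\<Sum>v\<in>U. (\<Sum>l<d. w l * K v l) * (\<Sum>i<d. K u i * X i v))"
      using row K_X_sym[OF _ u] by (intro sum.cong) auto
    also have "\<dots> = (\<Sum>l<d. w l * (\<Sum>i<d. K u i * (\<Sum>v\<in>U. X i v * K v l)))"
      by (simp add: sum_distrib_left sum_distrib_right sum.swap[where A = U] mult_ac)
        (rule sum.swap)
    also have "\<dots> = r u"
      using K_X_K[OF u] row[OF u] by simp
    finally show ?thesis .
  qed
  have "(\<Sum>i<d. (\<Sum>v\<in>U. X i v * y v) * (\<Sum>v\<in>U. r v * K v i)) =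
        (\<Sum>u\<in>U. y u * (\<Sum>v\<in>U. r v * (\<Sum>i<d. K v i * X i u)))"
    by (simp add: sum_distrib_left sum_distrib_right sum.swap[where A = "{..<d}"] mult_ac)
  also have "\<dots> = (\<Sum>u\<in>U. r u * y u)"
    by (simp add: proj mult.commute)
  finally show ?thesis ..
qed

lemma norm_1_1_mult_le:
  assumes "finite U"
  shows "(\<Sum>i<d. \<bar>\<Sum>v\<in>U. X i v * y v\<bar>) \<le> norm_1_1 U d X * (\<Sum>v\<in>U. \<bar>y v\<bar>)"
proof -
  have col: "(\<Sum>i<d. \<bar>X i v\<bar>) \<le> norm_1_1 U d X" if "v \<in> U" for v
    using assms that unfolding norm_1_1_def by (auto intro!: Max_ge)
  have "(\<Sum>i<d. \<bar>\<Sum>v\<in>U. X i v * y v\<bar>) \<le> (\<Sum>i<d. \<Sum>v\<in>U. \<bar>X i v\<bar> * \<bar>y v\<bar>)"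
    by (intro sum_mono) (simp add: sum_abs[THEN order_trans] abs_mult)
  also have "\<dots> = (\<Sum>v\<in>U. \<bar>y v\<bar> * (\<Sum>i<d. \<bar>X i v\<bar>))"
    by (simp add: sum_distrib_left sum.swap[where A = "{..<d}"] mult_ac)
  also have "\<dots> \<le> (\<Sum>v\<in>U. \<bar>y v\<bar> * norm_1_1 U d X)"
    by (intro sum_mono mult_left_mono col) auto
  finally show ?thesis
    by (simp add: sum_distrib_left mult_ac)
qed

lemma finite_tests_from: "finite (tests_from H h :: ('o::finite, 'a::finite) test set)"
proof (rule finite_subset)
  show "tests_from H h \<subseteq> {\<sigma> :: ('o \<times> 'a) list. length \<sigma> \<le> H} \<times> UNIV"
    by (auto simp: tests_from_def)
  show "finite ({\<sigma> :: ('o \<times> 'a) list. length \<sigma> \<le> H} \<times> (UNIV :: 'o set))"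
    using finite_lists_length_le[OF finite_UNIV, of H] by (intro finite_cartesian_product) auto
qed

lemma core_matrix_hists_length:
  "core_matrix_hists H U f h ks \<Longrightarrow> \<tau> \<in> set ks \<Longrightarrow> length \<tau> = h"
  by (cases "h = 0") (auto simp: core_matrix_hists_def)

lemma core_matrix_hists_span:
  assumes "core_matrix_hists H U f h ks" and "length \<tau> = h"
  shows "\<exists>c. \<forall>v\<in>U (Suc h). test_prob f \<tau> v = (\<Sum>i<length ks. c i * core_mat f ks v i)"
proof (cases "h = 0")
  case True
  with assms have "ks = [[]]" and "\<tau> = []"
    by (auto simp: core_matrix_hists_def)
  then show ?thesis
    by (intro exI[of _ "\<lambda>_. 1"]) (simp add: core_mat_def)
next
  case False
  with assms show ?thesis
    by (auto simp: core_matrix_hists_def core_mat_def)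
qed

locale psr_model =
  fixes H :: nat
    and U :: "nat \<Rightarrow> ('o::finite, 'a::finite) test set"
    and f :: "('o,'a) hist \<Rightarrow> 'o \<Rightarrow> real"
    and \<alpha> :: real
    and m :: "nat \<Rightarrow> 'o \<Rightarrow> 'a \<Rightarrow> ('o,'a) test \<Rightarrow> ('o,'a) test \<Rightarrow> real"
    and \<pi> :: "('o,'a) hist \<Rightarrow> 'o \<Rightarrow> 'a \<Rightarrow> real"
  assumes H_pos: "1 \<le> H"
    and alpha_pos: "0 < \<alpha>"
    and psr: "valid_psr H U f"
    and core_bd: "core_bound H U f \<alpha>"
    and m_core: "\<forall>h\<in>{1..H - 1}. \<forall>ob a. \<forall>u\<in>U (Suc h). \<forall>\<tau>. length \<tau> = h - 1 \<longrightarrow>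
                   test_prob f \<tau> ((ob, a) # fst u, snd u) = (\<Sum>v\<in>U h. m h ob a u v * test_prob f \<tau> v)"
    and m_span: "\<forall>h\<in>{1..H - 1}. \<forall>ob a. \<forall>u\<in>U (Suc h). \<exists>c. \<forall>v\<in>U h.
                   m h ob a u v = (\<Sum>\<tau>\<in>{\<tau>. length \<tau> = h - 1}. c \<tau> * test_prob f \<tau> v)"
    and policy: "valid_policy H \<pi>"
begin

lemma valid_model: "valid_model H f"
  using psr by (simp add: valid_psr_def)

lemma U_subset_tests_from: "h \<in> {1..H} \<Longrightarrow> U h \<subseteq> tests_from H h"
  using psr by (simp add: valid_psr_def core_test_set_def)

lemma finite_U: "h \<in> {1..H} \<Longrightarrow> finite (U h)"
  using U_subset_tests_from finite_tests_from by (rule finite_subset)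

lemma card_U_le_U_card: "h \<in> {1..H} \<Longrightarrow> card (U h) \<le> U_card H U"
  unfolding U_card_def by (rule Max_ge) auto

lemma sum_abs_test_prob_le_UA_card:
  assumes "length \<tau> < H"
  shows "(\<Sum>u\<in>U (Suc (length \<tau>)). \<bar>test_prob f \<tau> u\<bar>) \<le> UA_card H U"
proof -
  let ?h = "Suc (length \<tau>)"
  have h: "?h \<in> {1..H}"
    using assms by simp
  have "(\<Sum>u\<in>U ?h. \<bar>test_prob f \<tau> u\<bar>) = (\<Sum>u\<in>U ?h. test_prob f \<tau> u)"
    using U_subset_tests_from[OF h]
    by (intro sum.cong refl abs_of_nonneg test_prob_nonneg[OF valid_model]) (auto simp: tests_from_def)
  also have "\<dots> \<le> card ((\<lambda>t. map snd (fst t)) ` U ?h)"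
    by (intro sum_test_prob_le_card_actions[OF valid_model] U_subset_tests_from finite_U h)
  also have "\<dots> \<le> UA_card H U"
    using h unfolding of_nat_le_iff UA_card_def by (intro Max_ge) auto
  finally show ?thesis .
qed

lemma psr_op_test_prob:
  assumes "length \<tau> < H - 1" and "u \<in> U (Suc (Suc (length \<tau>)))"
  shows "psr_op m U (Suc (length \<tau>)) ob a (test_prob f \<tau>) u = f \<tau> ob * test_prob f (\<tau> @ [(ob, a)]) u"
proof -
  have "Suc (length \<tau>) \<in> {1..H - 1}"
    using assms(1) by simp
  with m_core assms(2) have "psr_op m U (Suc (length \<tau>)) ob a (test_prob f \<tau>) u =
      test_prob f \<tau> ((ob, a) # fst u, snd u)"
    unfolding psr_op_def by fastforce
  then show ?thesis
    by (simp add: test_prob_Cons)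
qed

lemma psr_ops_test_prob:
  assumes "length \<tau> + length \<sigma> \<le> H - 1" and "u \<in> U (Suc (length \<tau> + length \<sigma>))"
  shows "psr_ops m U (length \<tau>) \<sigma> (test_prob f \<tau>) u = obs_prod f \<tau> \<sigma> * test_prob f (\<tau> @ \<sigma>) u"
  using assms
proof (induction \<sigma> arbitrary: \<tau>)
  case (Cons p \<sigma>)
  let ?j = "Suc (length \<tau>)"
  have "psr_ops m U (length \<tau>) (p # \<sigma>) (test_prob f \<tau>) u =
        psr_ops m U ?j \<sigma> (\<lambda>v. f \<tau> (fst p) * test_prob f (\<tau> @ [p]) v) u"
    using Cons.prems psr_op_test_prob[of \<tau> _ "fst p" "snd p"]
    by (simp, intro psr_ops_cong) auto
  also have "\<dots> = f \<tau> (fst p) * psr_ops m U (length (\<tau> @ [p])) \<sigma> (test_prob f (\<tau> @ [p])) u"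
    by (simp add: psr_ops_mult)
  also have "\<dots> = f \<tau> (fst p) * (obs_prod f (\<tau> @ [p]) \<sigma> * test_prob f (\<tau> @ [p] @ \<sigma>) u)"
    using Cons.IH[of "\<tau> @ [p]"] Cons.prems by simp
  finally show ?case
    by (simp add: obs_prod_Cons)
qed simp

lemma initial_test_prob_nonzero:
  obtains u where "u \<in> U 1" and "test_prob f [] u \<noteq> 0"
proof (rule ccontr)
  assume "\<not> thesis"
  with that have zero: "\<forall>u\<in>U 1. test_prob f [] u = 0"
    by blast
  have "test_prob f [] ([], ob) = 0" for ob
  proof -
    have "core_test_set H f 1 (U 1)"
      using psr H_pos by (auto simp: valid_psr_def)
    moreover have "([], ob) \<in> tests_from H 1"
      using H_pos by (simp add: tests_from_def)
    ultimately obtain c where "test_prob f [] ([], ob) = (\<Sum>u\<in>U 1. c u * test_prob f [] u)"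
      unfolding core_test_set_def by fastforce
    with zero show ?thesis
      by simp
  qed
  then have "(\<Sum>ob\<in>UNIV. f [] ob) = 0"
    by (simp add: test_prob_def reach_prob_def)
  moreover have "(\<Sum>ob\<in>UNIV. f [] ob) = 1"
    using valid_model H_pos by (simp add: valid_model_def)
  ultimately show False
    by simp
qed

lemma alpha_le_UA_card: "\<alpha> \<le> UA_card H U"
proof -
  obtain ks X where ks: "core_matrix_hists H U f 0 ks"
    and pinv: "is_mp_pinv (U 1) (length ks) (core_mat f ks) X"
    and nb: "norm_1_1 (U 1) (length ks) X \<le> 1 / \<alpha>"
    using core_bd H_pos unfolding core_bound_def by force
  have ks0: "ks = [[]]"
    using ks by (simp add: core_matrix_hists_def)
  obtain u0 where u0: "u0 \<in> U 1" "test_prob f [] u0 \<noteq> 0"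
    by (rule initial_test_prob_nonzero)
  have "test_prob f [] u0 * (\<Sum>v\<in>U 1. X 0 v * test_prob f [] v) = test_prob f [] u0"
    using pinv u0(1) ks0 unfolding is_mp_pinv_def core_mat_def by auto
  then have "1 = (\<Sum>i<length ks. \<bar>\<Sum>v\<in>U 1. X i v * test_prob f [] v\<bar>)"
    using u0(2) ks0 by simp
  also have "\<dots> \<le> norm_1_1 (U 1) (length ks) X * (\<Sum>v\<in>U 1. \<bar>test_prob f [] v\<bar>)"
    using H_pos by (intro norm_1_1_mult_le finite_U) auto
  also have "\<dots> \<le> 1 / \<alpha> * UA_card H U"
    using nb sum_abs_test_prob_le_UA_card[of "[]"] H_pos alpha_pos
    by (intro mult_mono) (auto simp: norm_1_1_def intro: sum_nonneg)
  finally show ?thesis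
    using alpha_pos by (simp add: field_simps)
qed

lemma m_row_in_core_span:
  assumes j: "j < H - 1" and ks: "core_matrix_hists H U f j ks" and u: "u \<in> U (Suc (Suc j))"
  obtains w where "\<And>v. v \<in> U (Suc j) \<Longrightarrow> m (Suc j) ob a u v = (\<Sum>l<length ks. w l * core_mat f ks v l)"
proof -
  let ?T = "{\<tau> :: ('o,'a) hist. length \<tau> = j}"
  obtain c where c: "\<And>v. v \<in> U (Suc j) \<Longrightarrow> m (Suc j) ob a u v = (\<Sum>\<tau>\<in>?T. c \<tau> * test_prob f \<tau> v)"
    using m_span j u by fastforce
  have "\<forall>\<tau>\<in>?T. \<exists>d. \<forall>v\<in>U (Suc j). test_prob f \<tau> v = (\<Sum>l<length ks. d l * core_mat f ks v l)"
    using core_matrix_hists_span[OF ks] by blast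
  then have "\<exists>D. \<forall>\<tau>\<in>?T. \<forall>v\<in>U (Suc j).
      test_prob f \<tau> v = (\<Sum>l<length ks. D \<tau> l * core_mat f ks v l)"
    by (rule bchoice)
  then obtain D where D: "\<forall>\<tau>\<in>?T. \<forall>v\<in>U (Suc j).
      test_prob f \<tau> v = (\<Sum>l<length ks. D \<tau> l * core_mat f ks v l)"
    by blast
  show ?thesis
  proof (rule that[of "\<lambda>l. \<Sum>\<tau>\<in>?T. c \<tau> * D \<tau> l"])
    fix v assume v: "v \<in> U (Suc j)"
    then have "m (Suc j) ob a u v = (\<Sum>\<tau>\<in>?T. c \<tau> * (\<Sum>l<length ks. D \<tau> l * core_mat f ks v l))"
      using c D by simp
    then show "m (Suc j) ob a u v = (\<Sum>l<length ks. (\<Sum>\<tau>\<in>?T. c \<tau> * D \<tau> l) * core_mat f ks v l)"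
      by (simp add: sum_distrib_left sum_distrib_right sum.swap[where A = ?T] mult_ac)
  qed
qed

lemma psr_op_core_expansion:
  assumes j: "j < H - 1"
  obtains ks X where "\<forall>\<tau>\<in>set ks. length \<tau> = j"
    and "\<And>y ob a u. u \<in> U (Suc (Suc j)) \<Longrightarrow> psr_op m U (Suc j) ob a y u =
      (\<Sum>i<length ks. (\<Sum>w\<in>U (Suc j). X i w * y w) * psr_op m U (Suc j) ob a (test_prob f (ks ! i)) u)"
    and "\<And>y. (\<Sum>i<length ks. \<bar>\<Sum>w\<in>U (Suc j). X i w * y w\<bar>) \<le> 1 / \<alpha> * (\<Sum>w\<in>U (Suc j). \<bar>y w\<bar>)"
proof -
  obtain ks X where ks: "core_matrix_hists H U f j ks"
    and pinv: "is_mp_pinv (U (Suc j)) (length ks) (core_mat f ks) X"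
    and nb: "norm_1_1 (U (Suc j)) (length ks) X \<le> 1 / \<alpha>"
    using core_bd j unfolding core_bound_def by fastforce
  show ?thesis
  proof (rule that)
    show "\<forall>\<tau>\<in>set ks. length \<tau> = j"
      using core_matrix_hists_length[OF ks] by blast
  next
    fix y ob a u assume u: "u \<in> U (Suc (Suc j))"
    obtain w where "\<And>v. v \<in> U (Suc j) \<Longrightarrow> m (Suc j) ob a u v = (\<Sum>l<length ks. w l * core_mat f ks v l)"
      using m_row_in_core_span[OF j ks u, where ob = ob and a = a] by blast
    from is_mp_pinv_expand[OF pinv this, of y]
    show "psr_op m U (Suc j) ob a y u =
      (\<Sum>i<length ks. (\<Sum>w\<in>U (Suc j). X i w * y w) * psr_op m U (Suc j) ob a (test_prob f (ks ! i)) u)"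
      unfolding psr_op_def core_mat_def .
  next
    fix y
    have "(\<Sum>i<length ks. \<bar>\<Sum>w\<in>U (Suc j). X i w * y w\<bar>) \<le>
          norm_1_1 (U (Suc j)) (length ks) X * (\<Sum>w\<in>U (Suc j). \<bar>y w\<bar>)"
      using j by (intro norm_1_1_mult_le finite_U) auto
    also have "\<dots> \<le> 1 / \<alpha> * (\<Sum>w\<in>U (Suc j). \<bar>y w\<bar>)"
      using nb by (intro mult_right_mono sum_nonneg) auto
    finally show "(\<Sum>i<length ks. \<bar>\<Sum>w\<in>U (Suc j). X i w * y w\<bar>) \<le> 1 / \<alpha> * (\<Sum>w\<in>U (Suc j). \<bar>y w\<bar>)" .
  qed
qed

lemma psr_ops_core_expansion:
  assumes j: "j < H - 1"
  obtains ks X where "\<forall>\<tau>\<in>set ks. length \<tau> = j"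
    and "\<And>\<sigma> y u. \<sigma> \<noteq> [] \<Longrightarrow> j + length \<sigma> \<le> H - 1 \<Longrightarrow> u \<in> U (Suc (j + length \<sigma>)) \<Longrightarrow>
      psr_ops m U j \<sigma> y u = (\<Sum>i<length ks. (\<Sum>w\<in>U (Suc j). X i w * y w) *
                               (obs_prod f (ks ! i) \<sigma> * test_prob f (ks ! i @ \<sigma>) u))"
    and "\<And>y. (\<Sum>i<length ks. \<bar>\<Sum>w\<in>U (Suc j). X i w * y w\<bar>) \<le> 1 / \<alpha> * (\<Sum>w\<in>U (Suc j). \<bar>y w\<bar>)"
proof -
  obtain ks X where lens: "\<forall>\<tau>\<in>set ks. length \<tau> = j"
    and step: "\<And>y ob a u. u \<in> U (Suc (Suc j)) \<Longrightarrow> psr_op m U (Suc j) ob a y u =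
      (\<Sum>i<length ks. (\<Sum>w\<in>U (Suc j). X i w * y w) * psr_op m U (Suc j) ob a (test_prob f (ks ! i)) u)"
    and norm: "\<And>y. (\<Sum>i<length ks. \<bar>\<Sum>w\<in>U (Suc j). X i w * y w\<bar>) \<le> 1 / \<alpha> * (\<Sum>w\<in>U (Suc j). \<bar>y w\<bar>)"
    using psr_op_core_expansion[OF j] by blast
  show ?thesis
  proof (rule that[OF lens _ norm])
    fix \<sigma> :: "('o,'a) hist" and y u
    assume ne: "\<sigma> \<noteq> []" and len: "j + length \<sigma> \<le> H - 1" and u: "u \<in> U (Suc (j + length \<sigma>))"
    then obtain p \<sigma>' where \<sigma>: "\<sigma> = p # \<sigma>'"
      by (cases \<sigma>) auto
    let ?c = "\<lambda>i. \<Sum>w\<in>U (Suc j). X i w * y w"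
    let ?M = "psr_op m U (Suc j) (fst p) (snd p)"
    have "psr_ops m U j \<sigma> y u = psr_ops m U (Suc j) \<sigma>' (?M y) u"
      by (simp add: \<sigma>)
    also have "\<dots> = psr_ops m U (Suc j) \<sigma>' (\<lambda>v. \<Sum>i<length ks. ?c i * ?M (test_prob f (ks ! i)) v) u"
      using u by (intro psr_ops_cong step) (simp_all add: \<sigma>)
    also have "\<dots> = (\<Sum>i<length ks. ?c i * psr_ops m U (Suc j) \<sigma>' (?M (test_prob f (ks ! i))) u)"
      by (simp only: psr_ops_sum_mult[OF finite_lessThan])
    also have "\<dots> = (\<Sum>i<length ks. ?c i * (obs_prod f (ks ! i) \<sigma> * test_prob f (ks ! i @ \<sigma>) u))"
    proof (intro sum.cong refl arg_cong[where f = "\<lambda>x. _ * x"])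
      fix i assume "i \<in> {..<length ks}"
      then have "length (ks ! i) = j"
        using lens by simp
      with len u psr_ops_test_prob[of "ks ! i" \<sigma> u]
      show "psr_ops m U (Suc j) \<sigma>' (?M (test_prob f (ks ! i))) u =
            obs_prod f (ks ! i) \<sigma> * test_prob f (ks ! i @ \<sigma>) u"
        by (simp add: \<sigma>)
    qed
    finally show "psr_ops m U j \<sigma> y u =
        (\<Sum>i<length ks. ?c i * (obs_prod f (ks ! i) \<sigma> * test_prob f (ks ! i @ \<sigma>) u))" .
  qed
qed

lemma sum_abs_psr_ops_core_bound:
  assumes j: "j < H - 1"
  obtains ks X where "\<forall>\<tau>\<in>set ks. length \<tau> = j"
    and "\<And>\<sigma> y. \<sigma> \<noteq> [] \<Longrightarrow> j + length \<sigma> \<le> H - 1 \<Longrightarrow>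
      (\<Sum>u\<in>U (Suc (j + length \<sigma>)). \<bar>psr_ops m U j \<sigma> y u\<bar>) \<le>
      UA_card H U * (\<Sum>i<length ks. \<bar>\<Sum>w\<in>U (Suc j). X i w * y w\<bar> * obs_prod f (ks ! i) \<sigma>)"
    and "\<And>y. (\<Sum>i<length ks. \<bar>\<Sum>w\<in>U (Suc j). X i w * y w\<bar>) \<le> 1 / \<alpha> * (\<Sum>w\<in>U (Suc j). \<bar>y w\<bar>)"
proof -
  obtain ks X where lens: "\<forall>\<tau>\<in>set ks. length \<tau> = j"
    and expand: "\<And>\<sigma> y u. \<sigma> \<noteq> [] \<Longrightarrow> j + length \<sigma> \<le> H - 1 \<Longrightarrow> u \<in> U (Suc (j + length \<sigma>)) \<Longrightarrow>
      psr_ops m U j \<sigma> y u = (\<Sum>i<length ks. (\<Sum>w\<in>U (Suc j). X i w * y w) *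
                               (obs_prod f (ks ! i) \<sigma> * test_prob f (ks ! i @ \<sigma>) u))"
    and norm: "\<And>y. (\<Sum>i<length ks. \<bar>\<Sum>w\<in>U (Suc j). X i w * y w\<bar>) \<le> 1 / \<alpha> * (\<Sum>w\<in>U (Suc j). \<bar>y w\<bar>)"
    using psr_ops_core_expansion[OF j] by blast
  show ?thesis
  proof (rule that[OF lens _ norm])
    fix \<sigma> :: "('o,'a) hist" and y
    assume ne: "\<sigma> \<noteq> []" and len: "j + length \<sigma> \<le> H - 1"
    let ?V = "U (Suc (j + length \<sigma>))"
    let ?c = "\<lambda>i. \<bar>\<Sum>w\<in>U (Suc j). X i w * y w\<bar> * obs_prod f (ks ! i) \<sigma>"
    have ob: "0 \<le> obs_prod f (ks ! i) \<sigma>" if "i < length ks" for i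
      using lens that len by (intro obs_prod_nonneg[OF valid_model]) auto
    have "(\<Sum>u\<in>?V. \<bar>psr_ops m U j \<sigma> y u\<bar>) \<le> (\<Sum>u\<in>?V. \<Sum>i<length ks. ?c i * \<bar>test_prob f (ks ! i @ \<sigma>) u\<bar>)"
      using ob by (intro sum_mono)
        (simp add: expand[OF ne len] sum_abs[THEN order_trans] abs_mult mult.assoc)
    also have "\<dots> = (\<Sum>i<length ks. ?c i * (\<Sum>u\<in>?V. \<bar>test_prob f (ks ! i @ \<sigma>) u\<bar>))"
      by (simp add: sum.swap[where B = "{..<length ks}"] sum_distrib_left)
    also have "\<dots> \<le> (\<Sum>i<length ks. ?c i * UA_card H U)"
    proof (intro sum_mono mult_left_mono)
      fix i assume "i \<in> {..<length ks}"
      with lens ob show "0 \<le> ?c i" and "(\<Sum>u\<in>?V. \<bar>test_prob f (ks ! i @ \<sigma>) u\<bar>) \<le> UA_card H U"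
        using sum_abs_test_prob_le_UA_card[of "ks ! i @ \<sigma>"] len H_pos by auto
    qed
    finally show "(\<Sum>u\<in>?V. \<bar>psr_ops m U j \<sigma> y u\<bar>) \<le> UA_card H U * (\<Sum>i<length ks. ?c i)"
      by (simp add: sum_distrib_left mult_ac)
  qed
qed

lemma one_le_UA_card_div_alpha: "1 \<le> UA_card H U / \<alpha>"
  using alpha_le_UA_card alpha_pos by simp

lemma policy_weighted_norm_psr_ops_le:
  assumes \<rho>: "length \<rho> = j" and len: "j + n \<le> H - 1"
  shows "(\<Sum>\<sigma>\<in>{\<sigma>. length \<sigma> = n}. policy_prob_from \<pi> \<rho> \<sigma> * (\<Sum>u\<in>U (Suc (j + n)). \<bar>psr_ops m U j \<sigma> y u\<bar>))
         \<le> UA_card H U / \<alpha> * (\<Sum>v\<in>U (Suc j). \<bar>y v\<bar>)"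
proof (cases "n = 0")
  case True
  then have "{\<sigma> :: ('o,'a) hist. length \<sigma> = n} = {[]}"
    by auto
  moreover have "0 \<le> (\<Sum>v\<in>U (Suc j). \<bar>y v\<bar>)"
    by (simp add: sum_nonneg)
  ultimately show ?thesis
    using True mult_right_mono[OF one_le_UA_card_div_alpha] by simp
next
  case False
  let ?UA = "real (UA_card H U)"
  from False len have "j < H - 1"
    by simp
  then obtain ks X where lens: "\<forall>\<tau>\<in>set ks. length \<tau> = j"
    and bound: "\<And>\<sigma> y. \<sigma> \<noteq> [] \<Longrightarrow> j + length \<sigma> \<le> H - 1 \<Longrightarrow>
      (\<Sum>u\<in>U (Suc (j + length \<sigma>)). \<bar>psr_ops m U j \<sigma> y u\<bar>) \<le>
      ?UA * (\<Sum>i<length ks. \<bar>\<Sum>w\<in>U (Suc j). X i w * y w\<bar> * obs_prod f (ks ! i) \<sigma>)"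
    and norm: "\<And>y. (\<Sum>i<length ks. \<bar>\<Sum>w\<in>U (Suc j). X i w * y w\<bar>) \<le> 1 / \<alpha> * (\<Sum>w\<in>U (Suc j). \<bar>y w\<bar>)"
    using sum_abs_psr_ops_core_bound by blast
  let ?c = "\<lambda>i. \<bar>\<Sum>w\<in>U (Suc j). X i w * y w\<bar>"
  have "(\<Sum>\<sigma>\<in>{\<sigma>. length \<sigma> = n}. policy_prob_from \<pi> \<rho> \<sigma> * (\<Sum>u\<in>U (Suc (j + n)). \<bar>psr_ops m U j \<sigma> y u\<bar>))
     \<le> (\<Sum>\<sigma>\<in>{\<sigma>. length \<sigma> = n}. policy_prob_from \<pi> \<rho> \<sigma> * (?UA * (\<Sum>i<length ks. ?c i * obs_prod f (ks ! i) \<sigma>)))"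
    using bound False len \<rho>
    by (intro sum_mono mult_left_mono policy_prob_from_nonneg[OF policy]) auto
  also have "\<dots> = ?UA * (\<Sum>i<length ks. ?c i *
      (\<Sum>\<sigma>\<in>{\<sigma>. length \<sigma> = n}. policy_prob_from \<pi> \<rho> \<sigma> * obs_prod f (ks ! i) \<sigma>))"
    by (simp add: sum_distrib_left sum.swap[where B = "{..<length ks}"] mult_ac)
  also have "\<dots> = ?UA * (\<Sum>i<length ks. ?c i)"
    using lens \<rho> len by (simp add: sum_policy_obs_prod_eq_1[OF valid_model policy])
  also have "\<dots> \<le> ?UA * (1 / \<alpha> * (\<Sum>w\<in>U (Suc j). \<bar>y w\<bar>))"
    using norm by (intro mult_left_mono) auto
  finally show ?thesis
    by simp
qed

end

section \<open>Error propagation for perturbed parameters\<close>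

locale perturbed_psr = psr_model H U f \<alpha> m \<pi> for H U f \<alpha> m \<pi> +
  fixes m' :: "nat \<Rightarrow> 'o \<Rightarrow> 'a \<Rightarrow> ('o::finite, 'a::finite) test \<Rightarrow> ('o,'a) test \<Rightarrow> real"
    and q0' :: "('o,'a) test \<Rightarrow> real"
    and \<epsilon>1 \<epsilon>op :: real
  assumes obs_in_UH: "\<forall>ob. ([], ob) \<in> U H"
    and eps1_pos: "0 < \<epsilon>1"
    and eps1_le: "\<epsilon>1 \<le> real (UA_card H U)"
    and eps_op: "\<epsilon>op = \<alpha> * \<epsilon>1 /
                   (4 * real H * real (UA_card H U) ^ 2 * real (U_card H U) * real (card (UNIV :: 'o set)))"
    and m_close: "\<forall>h\<in>{1..H - 1}. \<forall>ob a. \<forall>u\<in>U (Suc h). \<forall>v\<in>U h. \<bar>m h ob a u v - m' h ob a u v\<bar> \<le> \<epsilon>op"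
    and q_close: "\<forall>u\<in>U 1. \<bar>test_prob f [] u - q0' u\<bar> \<le> \<epsilon>op"
begin

definition pred_vec :: "('o,'a) hist \<Rightarrow> ('o,'a) test \<Rightarrow> real" where
  "pred_vec \<sigma> = psr_ops m' U 0 \<sigma> q0'"

definition true_vec :: "('o,'a) hist \<Rightarrow> ('o,'a) test \<Rightarrow> real" where
  "true_vec \<sigma> = psr_ops m U 0 \<sigma> (test_prob f [])"

definition pred_err :: "nat \<Rightarrow> real" where
  "pred_err n = (\<Sum>\<sigma>\<in>{\<sigma>. length \<sigma> = n}.
     policy_prob_from \<pi> [] \<sigma> * (\<Sum>u\<in>U (Suc n). \<bar>pred_vec \<sigma> u - true_vec \<sigma> u\<bar>))"

definition step_err :: "nat \<Rightarrow> real" where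
  "step_err j = (\<Sum>\<rho>\<in>{\<rho>. length \<rho> = Suc j}. policy_prob_from \<pi> [] \<rho> *
     (\<Sum>v\<in>U (Suc (Suc j)). \<bar>psr_op_err m' m U (Suc j) (fst (\<rho> ! j)) (snd (\<rho> ! j)) (pred_vec (take j \<rho>)) v\<bar>))"

lemma true_vec_eq:
  "length \<sigma> \<le> H - 1 \<Longrightarrow> u \<in> U (Suc (length \<sigma>)) \<Longrightarrow> true_vec \<sigma> u = reach_prob f \<sigma> * test_prob f \<sigma> u"
  using psr_ops_test_prob[of "[]" \<sigma> u] by (simp add: true_vec_def reach_prob_def)

lemma eps_op_nonneg: "0 \<le> \<epsilon>op"
  unfolding eps_op using alpha_pos eps1_pos by simp

lemma telescope_term_le:
  assumes j: "j < n" and n: "n \<le> H - 1"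
  shows "(\<Sum>\<sigma>\<in>{\<sigma>. length \<sigma> = n}. policy_prob_from \<pi> [] \<sigma> * (\<Sum>u\<in>U (Suc n).
            \<bar>psr_ops m U (Suc j) (drop (Suc j) \<sigma>)
              (psr_op_err m' m U (Suc j) (fst (\<sigma> ! j)) (snd (\<sigma> ! j)) (pred_vec (take j \<sigma>))) u\<bar>))
         \<le> UA_card H U / \<alpha> * step_err j"
proof -
  define k where "k = n - Suc j"
  have nk: "n = Suc j + k"
    using j by (simp add: k_def)
  let ?E = "\<lambda>\<rho>. psr_op_err m' m U (Suc j) (fst (\<rho> ! j)) (snd (\<rho> ! j)) (pred_vec (take j \<rho>))"
  have "(\<Sum>\<sigma>\<in>{\<sigma>. length \<sigma> = n}. policy_prob_from \<pi> [] \<sigma> * (\<Sum>u\<in>U (Suc n).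
            \<bar>psr_ops m U (Suc j) (drop (Suc j) \<sigma>) (?E \<sigma>) u\<bar>)) =
        (\<Sum>\<rho>\<in>{\<rho>. length \<rho> = Suc j}. policy_prob_from \<pi> [] \<rho> * (\<Sum>\<sigma>\<in>{\<sigma>. length \<sigma> = k}.
            policy_prob_from \<pi> \<rho> \<sigma> * (\<Sum>u\<in>U (Suc (Suc j + k)). \<bar>psr_ops m U (Suc j) \<sigma> (?E \<rho>) u\<bar>)))"
    unfolding nk sum_lists_length_add
    by (intro sum.cong refl) (simp add: policy_prob_from_append sum_distrib_left nth_append mult_ac)
  also have "\<dots> \<le> (\<Sum>\<rho>\<in>{\<rho>. length \<rho> = Suc j}. policy_prob_from \<pi> [] \<rho> *
                    (UA_card H U / \<alpha> * (\<Sum>v\<in>U (Suc (Suc j)). \<bar>?E \<rho> v\<bar>)))"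
    using n nk
    by (intro sum_mono mult_left_mono policy_weighted_norm_psr_ops_le policy_prob_from_nonneg[OF policy]) auto
  also have "\<dots> = UA_card H U / \<alpha> * step_err j"
    by (simp add: step_err_def sum_distrib_left mult_ac)
  finally show ?thesis .
qed

lemma pred_err_le_telescope:
  assumes n: "n \<le> H - 1"
  shows "pred_err n \<le> UA_card H U / \<alpha> *
           ((\<Sum>j<n. step_err j) + (\<Sum>v\<in>U 1. \<bar>q0' v - test_prob f [] v\<bar>))"
proof -
  let ?N = "{\<sigma> :: ('o,'a) hist. length \<sigma> = n}"
  let ?T = "\<lambda>j \<sigma>. psr_ops m U (Suc j) (drop (Suc j) \<sigma>)
              (psr_op_err m' m U (Suc j) (fst (\<sigma> ! j)) (snd (\<sigma> ! j)) (pred_vec (take j \<sigma>)))"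
  let ?R = "\<lambda>\<sigma>. psr_ops m U 0 \<sigma> (\<lambda>v. q0' v - test_prob f [] v)"
  have "\<bar>pred_vec \<sigma> u - true_vec \<sigma> u\<bar> \<le> (\<Sum>j<n. \<bar>?T j \<sigma> u\<bar>) + \<bar>?R \<sigma> u\<bar>" if "\<sigma> \<in> ?N" for \<sigma> u
    using that unfolding pred_vec_def true_vec_def psr_ops_diff_telescope
    by (auto intro: abs_triangle_ineq[THEN order_trans] sum_abs[THEN add_right_mono])
  then have "pred_err n \<le> (\<Sum>\<sigma>\<in>?N. policy_prob_from \<pi> [] \<sigma> * (\<Sum>u\<in>U (Suc n). (\<Sum>j<n. \<bar>?T j \<sigma> u\<bar>) + \<bar>?R \<sigma> u\<bar>))"
    unfolding pred_err_def using n
    by (intro sum_mono mult_left_mono policy_prob_from_nonneg[OF policy]) auto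
  also have "\<dots> = (\<Sum>j<n. \<Sum>\<sigma>\<in>?N. policy_prob_from \<pi> [] \<sigma> * (\<Sum>u\<in>U (Suc n). \<bar>?T j \<sigma> u\<bar>))
      + (\<Sum>\<sigma>\<in>?N. policy_prob_from \<pi> [] \<sigma> * (\<Sum>u\<in>U (Suc n). \<bar>?R \<sigma> u\<bar>))"
    by (simp add: sum.distrib distrib_left sum_distrib_left sum.swap[where A = ?N]
        sum.swap[where B = "{..<n}"])
  also have "\<dots> \<le> (\<Sum>j<n. UA_card H U / \<alpha> * step_err j)
      + UA_card H U / \<alpha> * (\<Sum>v\<in>U 1. \<bar>q0' v - test_prob f [] v\<bar>)"
    using n policy_weighted_norm_psr_ops_le[of "[]" 0 n]
    by (intro add_mono sum_mono telescope_term_le) auto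
  finally show ?thesis
    by (simp add: distrib_left sum_distrib_left)
qed

lemma policy_weighted_norm_true_vec_le:
  assumes j: "j \<le> H - 1"
  shows "(\<Sum>\<rho>\<in>{\<rho>. length \<rho> = j}. policy_prob_from \<pi> [] \<rho> * (\<Sum>u\<in>U (Suc j). \<bar>true_vec \<rho> u\<bar>))
         \<le> UA_card H U"
proof -
  have "(\<Sum>\<rho>\<in>{\<rho>. length \<rho> = j}. policy_prob_from \<pi> [] \<rho> * (\<Sum>u\<in>U (Suc j). \<bar>true_vec \<rho> u\<bar>))
        \<le> (\<Sum>\<rho>\<in>{\<rho>. length \<rho> = j}. policy_prob_from \<pi> [] \<rho> * (obs_prod f [] \<rho> * UA_card H U))"
  proof (intro sum_mono mult_left_mono)
    fix \<rho> :: "('o,'a) hist" assume \<rho>: "\<rho> \<in> {\<rho>. length \<rho> = j}"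
    then have ob: "0 \<le> obs_prod f [] \<rho>"
      using j by (intro obs_prod_nonneg[OF valid_model]) auto
    have "(\<Sum>u\<in>U (Suc j). \<bar>true_vec \<rho> u\<bar>) = obs_prod f [] \<rho> * (\<Sum>u\<in>U (Suc j). \<bar>test_prob f \<rho> u\<bar>)"
      using \<rho> j ob by (simp add: true_vec_eq reach_prob_def abs_mult sum_distrib_left)
    also have "\<dots> \<le> obs_prod f [] \<rho> * UA_card H U"
      using \<rho> j H_pos ob sum_abs_test_prob_le_UA_card[of \<rho>] by (intro mult_left_mono) auto
    finally show "(\<Sum>u\<in>U (Suc j). \<bar>true_vec \<rho> u\<bar>) \<le> obs_prod f [] \<rho> * UA_card H U" .
    show "0 \<le> policy_prob_from \<pi> [] \<rho>"
      using \<rho> j by (intro policy_prob_from_nonneg[OF policy]) auto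
  qed
  also have "\<dots> = UA_card H U"
    using j by (simp add: sum_distrib_right[symmetric] mult.assoc[symmetric]
        sum_policy_obs_prod_eq_1[OF valid_model policy])
  finally show ?thesis .
qed

lemma policy_weighted_norm_pred_vec_le:
  assumes j: "j \<le> H - 1"
  shows "(\<Sum>\<rho>\<in>{\<rho>. length \<rho> = j}. policy_prob_from \<pi> [] \<rho> * (\<Sum>u\<in>U (Suc j). \<bar>pred_vec \<rho> u\<bar>))
         \<le> UA_card H U + pred_err j"
proof -
  have "(\<Sum>\<rho>\<in>{\<rho>. length \<rho> = j}. policy_prob_from \<pi> [] \<rho> * (\<Sum>u\<in>U (Suc j). \<bar>pred_vec \<rho> u\<bar>))
     \<le> (\<Sum>\<rho>\<in>{\<rho>. length \<rho> = j}. policy_prob_from \<pi> [] \<rho> * (\<Sum>u\<in>U (Suc j). \<bar>true_vec \<rho> u\<bar>)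
          + policy_prob_from \<pi> [] \<rho> * (\<Sum>u\<in>U (Suc j). \<bar>pred_vec \<rho> u - true_vec \<rho> u\<bar>))"
    unfolding distrib_left[symmetric] sum.distrib[symmetric] using j
    by (intro sum_mono mult_left_mono policy_prob_from_nonneg[OF policy]) auto
  also have "\<dots> \<le> UA_card H U + pred_err j"
    unfolding sum.distrib pred_err_def using policy_weighted_norm_true_vec_le[OF j] by simp
  finally show ?thesis .
qed

lemma step_err_le:
  assumes j: "Suc j \<le> H - 1"
  shows "step_err j \<le> U_card H U * \<epsilon>op * card (UNIV :: 'o set) * (UA_card H U + pred_err j)"
proof -
  let ?C = "real (U_card H U) * \<epsilon>op"
  let ?P = "\<lambda>\<rho>. policy_prob_from \<pi> [] \<rho>"
  define norm where "norm \<rho> = (\<Sum>w\<in>U (Suc j). \<bar>pred_vec \<rho> w\<bar>)" for \<rho>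
  have op: "(\<Sum>v\<in>U (Suc (Suc j)). \<bar>psr_op_err m' m U (Suc j) ob a y v\<bar>) \<le> ?C * (\<Sum>w\<in>U (Suc j). \<bar>y w\<bar>)"
    for ob a y
  proof -
    have "\<forall>u\<in>U (Suc (Suc j)). \<forall>v\<in>U (Suc j). \<bar>m' (Suc j) ob a u v - m (Suc j) ob a u v\<bar> \<le> \<epsilon>op"
      using m_close j by (auto simp: abs_minus_commute)
    then have "(\<Sum>v\<in>U (Suc (Suc j)). \<bar>psr_op_err m' m U (Suc j) ob a y v\<bar>) \<le>
               card (U (Suc (Suc j))) * \<epsilon>op * (\<Sum>w\<in>U (Suc j). \<bar>y w\<bar>)"
      by (rule sum_abs_psr_op_err_le)
    also have "\<dots> \<le> ?C * (\<Sum>w\<in>U (Suc j). \<bar>y w\<bar>)"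
      using card_U_le_U_card[of "Suc (Suc j)"] j eps_op_nonneg
      by (intro mult_right_mono sum_nonneg) auto
    finally show ?thesis .
  qed
  have "step_err j \<le> (\<Sum>\<rho>\<in>{\<rho>. length \<rho> = Suc j}. ?P \<rho> * (?C * norm (take j \<rho>)))"
    unfolding step_err_def norm_def using j
    by (intro sum_mono mult_left_mono op policy_prob_from_nonneg[OF policy]) auto
  also have "\<dots> = (\<Sum>\<rho>\<in>{\<rho>. length \<rho> = j}. ?P \<rho> * (?C * norm \<rho>) *
                   (\<Sum>ob\<in>UNIV. \<Sum>a\<in>UNIV. \<pi> \<rho> ob a))"
    unfolding sum_hists_length_Suc
    by (simp add: policy_prob_from_snoc sum_distrib_left sum_distrib_right mult_ac)
  also have "\<dots> = ?C * card (UNIV :: 'o set) * (\<Sum>\<rho>\<in>{\<rho>. length \<rho> = j}. ?P \<rho> * norm \<rho>)"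
    using policy j by (simp add: valid_policy_def sum_distrib_left mult_ac)
  also have "\<dots> \<le> ?C * card (UNIV :: 'o set) * (UA_card H U + pred_err j)"
    using j eps_op_nonneg policy_weighted_norm_pred_vec_le[of j] unfolding norm_def
    by (intro mult_left_mono) auto
  finally show ?thesis .
qed

lemma one_le_UA_card: "1 \<le> real (UA_card H U)"
proof -
  have "0 < real (UA_card H U)"
    using eps1_pos eps1_le by linarith
  then show ?thesis
    by simp
qed

lemma one_le_U_card: "1 \<le> real (U_card H U)"
proof -
  have "U H \<noteq> {}"
    using obs_in_UH by blast
  then have "1 \<le> card (U H)"
    using finite_U[of H] H_pos by (simp add: Suc_le_eq card_gt_0_iff)
  then show ?thesis
    using card_U_le_U_card[of H] H_pos by simp
qed

lemma initial_err_le: "(\<Sum>v\<in>U 1. \<bar>q0' v - test_prob f [] v\<bar>) \<le> U_card H U * \<epsilon>op"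
proof -
  have "(\<Sum>v\<in>U 1. \<bar>q0' v - test_prob f [] v\<bar>) \<le> card (U 1) * \<epsilon>op"
    using q_close sum_mono[of "U 1" "\<lambda>v. \<bar>q0' v - test_prob f [] v\<bar>" "\<lambda>_. \<epsilon>op"]
    by (simp add: abs_minus_commute)
  also have "\<dots> \<le> U_card H U * \<epsilon>op"
    using card_U_le_U_card[of 1] H_pos eps_op_nonneg by (intro mult_right_mono) auto
  finally show ?thesis .
qed

lemma error_budget:
  assumes n: "n \<le> H - 1"
  shows "UA_card H U / \<alpha> * (U_card H U * \<epsilon>op) *
           (2 * real n * card (UNIV :: 'o set) * UA_card H U + 1) \<le> 3 / 4 * \<epsilon>1"
proof -
  let ?Oc = "real (card (UNIV :: 'o set))" and ?UA = "real (UA_card H U)"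
  have Oc: "1 \<le> ?Oc"
    using finite_UNIV_card_ge_0[where 'a = 'o] by simp
  have "2 * real n * ?Oc * ?UA + 1 \<le> (2 * real n + 1) * (?Oc * ?UA)"
    using Oc one_le_UA_card mult_mono[OF Oc one_le_UA_card] by (simp add: algebra_simps)
  also have "\<dots> \<le> 3 * H * (?Oc * ?UA)"
    using n H_pos Oc one_le_UA_card by (intro mult_right_mono) auto
  finally have "?UA / \<alpha> * (U_card H U * \<epsilon>op) * (2 * real n * ?Oc * ?UA + 1)
                \<le> ?UA / \<alpha> * (U_card H U * \<epsilon>op) * (3 * H * (?Oc * ?UA))"
    using alpha_pos eps_op_nonneg by (intro mult_left_mono) auto
  also have "\<dots> = 3 / 4 * \<epsilon>1"
    unfolding eps_op using alpha_pos one_le_UA_card one_le_U_card Oc H_pos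
    by (simp add: field_simps power2_eq_square)
  finally show ?thesis .
qed

lemma pred_err_le: "n \<le> H - 1 \<Longrightarrow> pred_err n \<le> 3 / 4 * \<epsilon>1"
proof (induction n rule: less_induct)
  case (less n)
  let ?C = "real (U_card H U) * \<epsilon>op" and ?Oc = "real (card (UNIV :: 'o set))"
    and ?UA = "real (UA_card H U)"
  have step: "step_err j \<le> ?C * ?Oc * (2 * ?UA)" if "j < n" for j
  proof -
    have "pred_err j \<le> ?UA"
      using less.IH[of j] less.prems that eps1_le eps1_pos by simp
    have "step_err j \<le> ?C * ?Oc * (?UA + pred_err j)"
      using step_err_le[of j] less.prems that by simp
    also have "\<dots> \<le> ?C * ?Oc * (2 * ?UA)"
      using \<open>pred_err j \<le> ?UA\<close> eps_op_nonneg by (intro mult_left_mono) auto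
    finally show ?thesis .
  qed
  have "pred_err n \<le> ?UA / \<alpha> * ((\<Sum>j<n. step_err j) + (\<Sum>v\<in>U 1. \<bar>q0' v - test_prob f [] v\<bar>))"
    using pred_err_le_telescope[OF less.prems] .
  also have "\<dots> \<le> ?UA / \<alpha> * ((\<Sum>j<n. ?C * ?Oc * (2 * ?UA)) + ?C)"
    using step initial_err_le alpha_pos by (intro mult_left_mono add_mono sum_mono) auto
  also have "\<dots> = ?UA / \<alpha> * ?C * (2 * real n * ?Oc * ?UA + 1)"
    by (simp add: algebra_simps)
  also have "\<dots> \<le> 3 / 4 * \<epsilon>1"
    using error_budget[OF less.prems] by (simp only: mult.assoc)
  finally show ?case .
qed

lemma traj_probs_snoc:
  assumes \<rho>: "length \<rho> = H - 1"
  shows "traj_prob_param H U m' q0' \<pi> (\<rho> @ [(ob, a)]) =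
           pred_vec \<rho> ([], ob) * (policy_prob_from \<pi> [] \<rho> * \<pi> \<rho> ob a)"
    and "traj_prob f \<pi> (\<rho> @ [(ob, a)]) = true_vec \<rho> ([], ob) * (policy_prob_from \<pi> [] \<rho> * \<pi> \<rho> ob a)"
proof -
  have "(\<rho> @ [(ob, a)]) ! (H - 1) = (ob, a)"
    using \<rho> by (metis nth_append_length)
  with \<rho> show "traj_prob_param H U m' q0' \<pi> (\<rho> @ [(ob, a)]) =
          pred_vec \<rho> ([], ob) * (policy_prob_from \<pi> [] \<rho> * \<pi> \<rho> ob a)"
    by (simp add: traj_prob_param_def pvec_eq_psr_ops pred_vec_def
        policy_prob_eq_from_Nil policy_prob_from_snoc)
  have "([], ob) \<in> U (Suc (length \<rho>))"
    using obs_in_UH \<rho> H_pos by simp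
  then have "true_vec \<rho> ([], ob) = reach_prob f \<rho> * f \<rho> ob"
    using \<rho> by (simp add: true_vec_eq test_prob_def reach_prob_def)
  then show "traj_prob f \<pi> (\<rho> @ [(ob, a)]) = true_vec \<rho> ([], ob) * (policy_prob_from \<pi> [] \<rho> * \<pi> \<rho> ob a)"
    by (simp add: traj_prob_def reach_prob_append obs_prod_Cons policy_prob_eq_from_Nil
        policy_prob_from_snoc)
qed

lemma sum_traj_error_snoc:
  assumes \<rho>: "length \<rho> = H - 1"
  shows "(\<Sum>ob\<in>UNIV. \<Sum>a\<in>UNIV.
            \<bar>traj_prob_param H U m' q0' \<pi> (\<rho> @ [(ob, a)]) - traj_prob f \<pi> (\<rho> @ [(ob, a)])\<bar>) =
         policy_prob_from \<pi> [] \<rho> * (\<Sum>ob\<in>UNIV. \<bar>pred_vec \<rho> ([], ob) - true_vec \<rho> ([], ob)\<bar>)"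
proof -
  let ?P = "policy_prob_from \<pi> [] \<rho>" and ?E = "\<lambda>ob. \<bar>pred_vec \<rho> ([], ob) - true_vec \<rho> ([], ob)\<bar>"
  have P: "0 \<le> ?P"
    using \<rho> by (intro policy_prob_from_nonneg[OF policy]) auto
  have pi: "0 \<le> \<pi> \<rho> ob a" and pi_sum: "(\<Sum>a\<in>UNIV. \<pi> \<rho> ob a) = 1" for ob a
    using policy \<rho> H_pos by (auto simp: valid_policy_def)
  have "\<bar>traj_prob_param H U m' q0' \<pi> (\<rho> @ [(ob, a)]) - traj_prob f \<pi> (\<rho> @ [(ob, a)])\<bar> =
        ?E ob * (?P * \<pi> \<rho> ob a)" for ob a
    unfolding traj_probs_snoc[OF \<rho>] left_diff_distrib[symmetric] abs_mult using P pi by simp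
  then have "(\<Sum>ob\<in>UNIV. \<Sum>a\<in>UNIV.
               \<bar>traj_prob_param H U m' q0' \<pi> (\<rho> @ [(ob, a)]) - traj_prob f \<pi> (\<rho> @ [(ob, a)])\<bar>) =
             (\<Sum>ob\<in>UNIV. ?P * ?E ob * (\<Sum>a\<in>UNIV. \<pi> \<rho> ob a))"
    by (simp add: sum_distrib_left sum_distrib_right mult_ac)
  then show ?thesis
    by (simp add: pi_sum sum_distrib_left)
qed

lemma sum_traj_error_le_pred_err:
  "(\<Sum>\<tau>\<in>{\<tau> :: ('o,'a) hist. length \<tau> = H}. \<bar>traj_prob_param H U m' q0' \<pi> \<tau> - traj_prob f \<pi> \<tau>\<bar>)
   \<le> pred_err (H - 1)"
proof -
  obtain K where H: "H = Suc K"
    using H_pos by (cases H) auto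
  let ?P = "policy_prob_from \<pi> []" and ?E = "\<lambda>\<rho> u. \<bar>pred_vec \<rho> u - true_vec \<rho> u\<bar>"
  have "(\<Sum>\<tau>\<in>{\<tau>. length \<tau> = H}. \<bar>traj_prob_param H U m' q0' \<pi> \<tau> - traj_prob f \<pi> \<tau>\<bar>) =
        (\<Sum>\<rho>\<in>{\<rho>. length \<rho> = K}. ?P \<rho> * (\<Sum>ob\<in>UNIV. ?E \<rho> ([], ob)))"
    using sum_traj_error_snoc H unfolding H sum_hists_length_Suc by (intro sum.cong) simp_all
  also have "\<dots> \<le> (\<Sum>\<rho>\<in>{\<rho>. length \<rho> = K}. ?P \<rho> * (\<Sum>u\<in>U H. ?E \<rho> u))"
  proof (intro sum_mono mult_left_mono)
    fix \<rho> :: "('o,'a) hist" assume "\<rho> \<in> {\<rho>. length \<rho> = K}"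
    then show "0 \<le> ?P \<rho>"
      using H by (intro policy_prob_from_nonneg[OF policy]) auto
    have "(\<Sum>ob\<in>UNIV. ?E \<rho> ([], ob)) = (\<Sum>u\<in>(\<lambda>ob. ([], ob)) ` UNIV. ?E \<rho> u)"
      by (simp add: sum.reindex inj_on_def)
    also have "\<dots> \<le> (\<Sum>u\<in>U H. ?E \<rho> u)"
      using obs_in_UH finite_U[of H] H_pos by (intro sum_mono2) auto
    finally show "(\<Sum>ob\<in>UNIV. ?E \<rho> ([], ob)) \<le> (\<Sum>u\<in>U H. ?E \<rho> u)" .
  qed
  also have "\<dots> = pred_err (H - 1)"
    using H by (simp add: pred_err_def)
  finally show ?thesis .
qed

end

theorem lemma17:
  fixes H :: nat
    and U :: "nat \<Rightarrow> ('o::finite, 'a::finite) test set"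
    and f :: "('o,'a) hist \<Rightarrow> 'o \<Rightarrow> real"
    and \<alpha> \<epsilon>1 \<epsilon>op :: real
    and m m' :: "nat \<Rightarrow> 'o \<Rightarrow> 'a \<Rightarrow> ('o,'a) test \<Rightarrow> ('o,'a) test \<Rightarrow> real"
    and q0' :: "('o,'a) test \<Rightarrow> real"
    and \<pi> :: "('o,'a) hist \<Rightarrow> 'o \<Rightarrow> 'a \<Rightarrow> real"
  assumes H_pos: "1 \<le> H"
    and alpha_pos: "0 < \<alpha>"
    and psr: "valid_psr H U f"
    and core_bd: "core_bound H U f \<alpha>"
    and obs_in_UH: "\<forall>ob. ([], ob) \<in> U H"
    and m_core: "\<forall>h\<in>{1..H - 1}. \<forall>ob a. \<forall>u\<in>U (Suc h). \<forall>\<tau>. length \<tau> = h - 1 \<longrightarrow>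
                   test_prob f \<tau> ((ob, a) # fst u, snd u) = (\<Sum>v\<in>U h. m h ob a u v * test_prob f \<tau> v)"
    and m_span: "\<forall>h\<in>{1..H - 1}. \<forall>ob a. \<forall>u\<in>U (Suc h). \<exists>c. \<forall>v\<in>U h.
                   m h ob a u v = (\<Sum>\<tau>\<in>{\<tau>. length \<tau> = h - 1}. c \<tau> * test_prob f \<tau> v)"
    and eps1_pos: "0 < \<epsilon>1"
    and eps1_le: "\<epsilon>1 \<le> real (UA_card H U)"
    and eps_op: "\<epsilon>op = \<alpha> * \<epsilon>1 /
                   (4 * real H * real (UA_card H U) ^ 2 * real (U_card H U) * real (card (UNIV :: 'o set)))"
    and m_close: "\<forall>h\<in>{1..H - 1}. \<forall>ob a. \<forall>u\<in>U (Suc h). \<forall>v\<in>U h. \<bar>m h ob a u v - m' h ob a u v\<bar> \<le> \<epsilon>op"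
    and q_close: "\<forall>u\<in>U 1. \<bar>test_prob f [] u - q0' u\<bar> \<le> \<epsilon>op"
    and policy: "valid_policy H \<pi>"
  shows "(\<Sum>\<tau>\<in>{\<tau> :: ('o,'a) hist. length \<tau> = H}.
            \<bar>traj_prob_param H U m' q0' \<pi> \<tau> - traj_prob f \<pi> \<tau>\<bar>) \<le> \<epsilon>1"
proof -
  interpret perturbed_psr H U f \<alpha> m \<pi> m' q0' \<epsilon>1 \<epsilon>op
    by unfold_locales (use assms in auto)
  have "(\<Sum>\<tau>\<in>{\<tau> :: ('o,'a) hist. length \<tau> = H}.
            \<bar>traj_prob_param H U m' q0' \<pi> \<tau> - traj_prob f \<pi> \<tau>\<bar>) \<le> pred_err (H - 1)"
    by (rule sum_traj_error_le_pred_err)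
  also have "\<dots> \<le> 3 / 4 * \<epsilon>1"
    by (rule pred_err_le) simp
  also have "\<dots> \<le> \<epsilon>1"
    using eps1_pos by simp
  finally show ?thesis .
qed

end
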